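(* Suppose Assumption I holds, i.e. there is $\alpha>0$ with $\limsup_{m\to\infty} m^{\alpha}\,\mathbb{E}T_m<\infty$. Then for any $T>0$, $\mathbb{P}$-a.s. $$\max_{1\le k\le 2^nT}N_{n,k}<4^{n/\alpha}n^{2/\alpha}$$ for all $n$ large enough.
   Context: Let $\Lambda$ be a finite measure on $[0,1]$, $\lambda_{b,k}=\int_{[0,1]}x^{k-2}(1-x)^{b-k}\Lambda(dx)$ for $2\le k\le b$. The $\Lambda$-coalescent $\Pi$ is the partition-valued Markov process on $\{1,2,\dots\}$ started from singletons in which, when there are $b$ blocks, each $k$-tuple of blocks merges at rate $\lambda_{b,k}$; $T_m=\inf\{t\ge0:\#\Pi(t)\le m\}$, $\inf\emptyset=\infty$. Lookdown construction on $(\Omega,\mathcal F,\mathbb P)$: particles at levels $i=1,2,\dots$ with locations in $\mathbb{R}^d$; single-birth events at rate $\Lambda(\{0\})$ for each pair $i<j$ (level $j$ copies level $i$'s location, higher levels shift up by one); multiple-birth events given by a Poisson point process on $\mathbb{R}_+\times(0,1]$ with intensity $dt\otimes x^{-2}\Lambda_0(dx)$ ($\Lambda_0=\Lambda|_{(0,1]}$), at an atom $(t_i,x_i)$ each level independently participates with probability $x_i$, participants copy the location of the lowest participating level, other levels keep their order and shift up. For $0\le t\le s$, $L_j^s(t)$ is the level at time $t$ of the ancestor of the particle at level $j$ at time $s$. For $0\le r<s$, $N^{r,s}=\#\{L_j^s(r):j\ge1\}$ is the number of distinct ancestors at time $r$ of the particles alive at time $s$ (equivalently, the number of blocks of the partition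 in which $i\sim j$ iff $L_i^s(r)=L_j^s(r)$), and $N_{n,k}=N^{(k-1)2^{-n},\,k2^{-n}}$. *)

theory Defs
  imports "HOL-Probability.Probability"
begin

definition poisson_point_process :: "'w measure \<Rightarrow> ('w \<Rightarrow> 'a set) \<Rightarrow> 'a measure \<Rightarrow> bool" where
  "poisson_point_process M Xi mu \<longleftrightarrow>
     prob_space M \<and>
     (\<forall>\<omega>\<in>space M. Xi \<omega> \<subseteq> space mu) \<and>
     (\<forall>A\<in>sets mu. emeasure mu A < \<infinity> \<longrightarrow>
        (AE \<omega> in M. finite (Xi \<omega> \<inter> A)) \<and>
        (\<lambda>\<omega>. card (Xi \<omega> \<inter> A)) \<in> measurable M (count_space UNIV) \<and>
        (\<forall>k::nat. measure M {\<omega>\<in>space M. card (Xi \<omega> \<inter> A) = k} =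
            (enn2real (emeasure mu A)) ^ k / fact k * exp (- enn2real (emeasure mu A)))) \<and>
     (\<forall>(A :: nat \<Rightarrow> 'a set) n.
        (\<forall>i<n. A i \<in> sets mu \<and> emeasure mu (A i) < \<infinity>) \<and> disjoint_family_on A {..<n} \<longrightarrow>
        prob_space.indep_vars M (\<lambda>_. count_space UNIV) (\<lambda>i \<omega>. card (Xi \<omega> \<inter> A i)) {..<n})"

text \<open>An event of the lookdown construction is a pair (t, b): its time t and a
participation indicator b on levels (level k participates iff b k; level 0 is unused,
levels are 1, 2, ...).\<close>

type_synonym event = "real \<times> (nat \<Rightarrow> bool)"

definition mark_space :: "(nat \<Rightarrow> bool) measure" where
  "mark_space = PiM UNIV (\<lambda>_::nat. count_space (UNIV :: bool set))"

text \<open>Mark intensity: Lambda({0}) times counting measure on the pair-indicators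
{i,j} with 1 \<le> i < j (single-birth events), plus the mixture over x in (0,1] with
density x^(-2) Lambda_0(dx) of i.i.d. Bernoulli(x) participation (multiple-birth events).\<close>

definition mark_intensity :: "real measure \<Rightarrow> (nat \<Rightarrow> bool) measure" where
  "mark_intensity \<Lambda> = measure_of (space mark_space) (sets mark_space)
     (\<lambda>B. emeasure \<Lambda> {0} *
            emeasure (count_space UNIV)
              {(i::nat, j::nat). 1 \<le> i \<and> i < j \<and> (\<lambda>k. k = i \<or> k = j) \<in> B}
          + (\<integral>\<^sup>+x\<in>{0<..1}. ennreal (1 / x\<^sup>2) *
              emeasure (PiM UNIV (\<lambda>_::nat. measure_pmf (bernoulli_pmf x))) B \<partial>\<Lambda>))"

definition event_intensity :: "real measure \<Rightarrow> event measure" where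
  "event_intensity \<Lambda> = restrict_space lborel {0..} \<Otimes>\<^sub>M mark_intensity \<Lambda>"

definition participants :: "(nat \<Rightarrow> bool) \<Rightarrow> nat set" where
  "participants b = {k. 1 \<le> k \<and> b k}"

text \<open>Level map of one event: the post-event level k is mapped to the pre-event level
of the particle it descends from. (For the coalescent this is the new rank of a block of
old rank k.)\<close>

definition level_map :: "nat set \<Rightarrow> nat \<Rightarrow> nat" where
  "level_map P k =
     (if P = {} then k
      else let l = (LEAST p. p \<in> P) in
        if k \<in> P then l
        else if k < l then k
        else k - card {p\<in>P. p < k} + 1)"

text \<open>An event is relevant for levels 1..j iff at least two of these levels participate;
other events fix all levels \<le> j.\<close>

definition relevant :: "nat \<Rightarrow> event \<Rightarrow> bool" where
  "relevant j e \<longleftrightarrow> 2 \<le> card (participants (snd e) \<inter> {1..j})"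

fun comp_desc :: "nat \<Rightarrow> event set \<Rightarrow> nat \<Rightarrow> nat" where
  "comp_desc 0 E k = k"
| "comp_desc (Suc n) E k =
     (let e = (SOME e. e \<in> E \<and> (\<forall>e'\<in>E. fst e' \<le> fst e))
      in comp_desc n (E - {e}) (level_map (participants (snd e)) k))"

fun comp_asc :: "nat \<Rightarrow> event set \<Rightarrow> nat \<Rightarrow> nat" where
  "comp_asc 0 E k = k"
| "comp_asc (Suc n) E k =
     (let e = (SOME e. e \<in> E \<and> (\<forall>e'\<in>E. fst e \<le> fst e'))
      in comp_asc n (E - {e}) (level_map (participants (snd e)) k))"

text \<open>Lookdown: L_j^s(r), the level at time r of the ancestor of the particle at level j
at time s (events in (r,s] act; the value 0 flags the null event of infinitely many
relevant events).\<close>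

definition ancestor_level :: "event set \<Rightarrow> real \<Rightarrow> real \<Rightarrow> nat \<Rightarrow> nat" where
  "ancestor_level Xi r s j =
     (let E = {e\<in>Xi. r < fst e \<and> fst e \<le> s \<and> relevant j e}
      in if finite E then comp_desc (card E) E j else 0)"

text \<open>The set {L_j^s(r) : j \<ge> 1}; N^{r,s} is its cardinality.\<close>
definition ancestors :: "event set \<Rightarrow> real \<Rightarrow> real \<Rightarrow> nat set" where
  "ancestors Xi r s = {ancestor_level Xi r s j | j. 1 \<le> j}"

text \<open>N_{n,k} \<le> bound, with N_{n,k} = N^{(k-1)2^-n, k 2^-n} (an infinite N exceeds every bound).\<close>
definition N_nk_less :: "event set \<Rightarrow> nat \<Rightarrow> nat \<Rightarrow> real \<Rightarrow> bool" where
  "N_nk_less Xi n k c \<longleftrightarrow>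
     (let A = ancestors Xi ((real k - 1) / 2 ^ n) (real k / 2 ^ n)
      in finite A \<and> real (card A) < c)"

text \<open>Lambda-coalescent via Pitman's Poisson construction driven by the same events:
block_rank Xi t i is the rank (by least element) at time t of the block containing i;
Pi(t) has i ~ j iff their ranks agree, so #Pi(t) = #{ranks}.\<close>

definition block_rank :: "event set \<Rightarrow> real \<Rightarrow> nat \<Rightarrow> nat" where
  "block_rank Xi t i =
     (let E = {e\<in>Xi. 0 \<le> fst e \<and> fst e \<le> t \<and> relevant i e}
      in if finite E then comp_asc (card E) E i else 0)"

definition coal_blocks :: "event set \<Rightarrow> real \<Rightarrow> nat set" where
  "coal_blocks Xi t = block_rank Xi t ` {1..}"

text \<open>T_m = inf{t \<ge> 0 : #Pi(t) \<le> m}, inf of the empty set = \<infinity>.\<close>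
definition T_hit :: "event set \<Rightarrow> nat \<Rightarrow> ennreal" where
  "T_hit Xi m = Inf {ennreal t | t. 0 \<le> t \<and> finite (coal_blocks Xi t) \<and> card (coal_blocks Xi t) \<le> m}"

end

theory Submission
  imports Defs
begin

text \<open>Cut the window ((k-1)/2^n, k/2^n] into 2^m cells. If no cell contains two events that are
relevant for the levels 1..J, the ancestral levels of 1..J are obtained by composing one level map
per cell, determined by the counts of event patterns in the cells; read backwards in time, the same
composition gives the block ranks of the coalescent on [0, 2^-n]. The Poisson counts of the
reflected cells have the same joint law, so the probability that the levels 1..J have at least c
ancestors is at most the probability that the coalescent still has more than c - 1 blocks at time
2^-n, up to the probability of a crowded cell, which vanishes as m grows. Markov's inequality bounds
this by 2^n E T_(c-1); with c = 4^(n/\<alpha>) n^(2/\<alpha>) and Assumption I the resulting bound summed over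
the 2^n T windows is of order 1/n^2, and Borel--Cantelli concludes.\<close>

section \<open>Level maps and their compositions\<close>

lemma level_map_le: "level_map P k \<le> k"
proof (cases "P = {}")
  case True then show ?thesis by (simp add: level_map_def)
next
  case False
  define l where "l = (LEAST p. p \<in> P)"
  have lP: "l \<in> P" using False unfolding l_def by (metis LeastI ex_in_conv)
  have lmin: "\<And>p. p \<in> P \<Longrightarrow> l \<le> p" unfolding l_def by (simp add: Least_le)
  show ?thesis
  proof (cases "k \<in> P")
    case True then show ?thesis using False lmin by (simp add: level_map_def Let_def l_def[symmetric])
  next
    case kn: False
    show ?thesis
    proof (cases "k < l")
      case True then show ?thesis using False kn by (simp add: level_map_def Let_def l_def[symmetric])
    next
      case False2: False
      have "l < k" using False2 kn lP by (metis antisym_conv2 not_less)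
      have fin: "finite {p\<in>P. p < k}" by simp
      have "l \<in> {p\<in>P. p < k}" using lP \<open>l < k\<close> by simp
      then have "card {p\<in>P. p < k} \<ge> 1" using fin by (metis One_nat_def Suc_leI card_gt_0_iff empty_iff)
      then show ?thesis using False kn False2 \<open>l < k\<close>
        by (simp add: level_map_def Let_def l_def[symmetric])
    qed
  qed
qed

lemma level_map_restrict:
  assumes "0 \<notin> P" "k \<le> J" "P \<inter> {1..J} \<noteq> {}"
  shows "level_map P k = level_map (P \<inter> {1..J}) k"
proof -
  have Pne: "P \<noteq> {}" using assms(3) by auto
  define l where "l = (LEAST p. p \<in> P)"
  have lP: "l \<in> P" using Pne unfolding l_def by (metis LeastI ex_in_conv)
  have lmin: "\<And>p. p \<in> P \<Longrightarrow> l \<le> p" unfolding l_def by (simp add: Least_le)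
  obtain q where q: "q \<in> P" "q \<le> J" using assms(3) by auto
  have lJ: "l \<le> J" using lmin[OF q(1)] q(2) by simp
  have l1: "1 \<le> l" using lP assms(1) by (cases l) auto
  have lS: "l \<in> P \<inter> {1..J}" using lP lJ l1 by simp
  have "(LEAST p. p \<in> P \<inter> {1..J}) = l"
    by (rule Least_equality) (use lS lmin in auto)
  moreover have "(k \<in> P) = (k \<in> P \<inter> {1..J})" using assms(1,2) by (cases k) auto
  moreover have "{p\<in>P. p < k} = {p\<in>P \<inter> {1..J}. p < k}" using assms(1,2)
    by (auto simp: Suc_le_eq) (metis gr0I)
  ultimately show ?thesis using Pne assms(3)
    by (simp add: level_map_def Let_def l_def[symmetric])
qed

lemma level_map_fixpoint:
  assumes "0 \<notin> P" "card (P \<inter> {1..J}) \<le> 1" "k \<le> J"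
  shows "level_map P k = k"
proof (cases "P = {}")
  case True then show ?thesis by (simp add: level_map_def)
next
  case Pne: False
  define l where "l = (LEAST p. p \<in> P)"
  have lP: "l \<in> P" using Pne unfolding l_def by (metis LeastI ex_in_conv)
  have lmin: "\<And>p. p \<in> P \<Longrightarrow> l \<le> p" unfolding l_def by (simp add: Least_le)
  have l1: "1 \<le> l" using lP assms(1) by (cases l) auto
  have uniq: "\<And>x y. x \<in> P \<inter> {1..J} \<Longrightarrow> y \<in> P \<inter> {1..J} \<Longrightarrow> x = y"
    using assms(2) card_le_Suc0_iff_eq[of "P \<inter> {1..J}"] by auto
  show ?thesis
  proof (cases "k \<in> P")
    case True
    have k1: "1 \<le> k" using True assms(1) by (cases k) auto
    have "l \<le> J" using lmin[OF True] assms(3) by simp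
    then have "l = k" using uniq[of l k] lP True l1 k1 assms(3) by simp
    then show ?thesis using Pne True by (simp add: level_map_def Let_def l_def[symmetric])
  next
    case kn: False
    show ?thesis
    proof (cases "k < l")
      case True then show ?thesis using Pne kn by (simp add: level_map_def Let_def l_def[symmetric])
    next
      case False2: False
      have "l < k" using False2 kn lP by (metis antisym_conv2 not_less)
      have "{p\<in>P. p < k} = {l}"
      proof
        show "{l} \<subseteq> {p\<in>P. p < k}" using lP \<open>l<k\<close> by simp
        show "{p\<in>P. p < k} \<subseteq> {l}"
        proof
          fix p assume "p \<in> {p\<in>P. p < k}"
          then have "p \<in> P \<inter> {1..J}" using assms(1,3) by (cases p) auto
          moreover have "l \<in> P \<inter> {1..J}" using lP l1 \<open>l<k\<close> assms(3) by simp
          ultimately show "p \<in> {l}" using uniq by auto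
        qed
      qed
      then show ?thesis using Pne kn False2 \<open>l < k\<close>
        by (simp add: level_map_def Let_def l_def[symmetric])
    qed
  qed
qed

lemma zero_notin_participants: "0 \<notin> participants b" by (simp add: participants_def)

lemma ex_latest_event: "finite E \<Longrightarrow> E \<noteq> {} \<Longrightarrow> \<exists>e\<in>E. \<forall>e'\<in>E. fst e' \<le> fst (e::event)"
proof -
  assume fE: "finite E" and ne: "E \<noteq> {}"
  have "Max (fst ` E) \<in> fst ` E" using fE ne by simp
  then obtain e where e: "e \<in> E" "fst e = Max (fst ` E)" by auto
  have "\<forall>e'\<in>E. fst e' \<le> fst e"
  proof
    fix e' assume "e' \<in> E"
    then have "fst e' \<in> fst ` E" by simp
    then have "fst e' \<le> Max (fst ` E)" using fE by simp
    then show "fst e' \<le> fst e" using e(2) by simp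
  qed
  then show ?thesis using e(1) by blast
qed

lemma ex_earliest_event: "finite E \<Longrightarrow> E \<noteq> {} \<Longrightarrow> \<exists>e\<in>E. \<forall>e'\<in>E. fst e \<le> fst (e'::event)"
proof -
  assume fE: "finite E" and ne: "E \<noteq> {}"
  have "Min (fst ` E) \<in> fst ` E" using fE ne by simp
  then obtain e where e: "e \<in> E" "fst e = Min (fst ` E)" by auto
  have "\<forall>e'\<in>E. fst e \<le> fst e'"
  proof
    fix e' assume "e' \<in> E"
    then have "fst e' \<in> fst ` E" by simp
    then have "Min (fst ` E) \<le> fst e'" using fE by simp
    then show "fst e \<le> fst e'" using e(2) by simp
  qed
  then show ?thesis using e(1) by blast
qed

lemma comp_desc_latest:
  assumes "finite E" "inj_on fst E" "e \<in> E" "\<forall>e'\<in>E. fst e' \<le> fst (e::event)"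
  shows "comp_desc (card E) E k = comp_desc (card E - 1) (E - {e}) (level_map (participants (snd e)) k)"
proof -
  have "card E \<noteq> 0" using assms(1,3) by auto
  then obtain n where n: "card E = Suc n" using not0_implies_Suc by blast
  define e0 where "e0 = (SOME e. e \<in> E \<and> (\<forall>e'\<in>E. fst e' \<le> fst e))"
  have e0: "e0 \<in> E \<and> (\<forall>e'\<in>E. fst e' \<le> fst e0)" unfolding e0_def
    by (rule someI[of _ e]) (use assms(3,4) in blast)
  then have "fst e0 = fst e" using assms(3,4) by (meson antisym)
  then have "e0 = e" using e0 assms(2,3) unfolding inj_on_def by blast
  have "comp_desc (Suc n) E k = comp_desc n (E - {e0}) (level_map (participants (snd e0)) k)"
    unfolding e0_def comp_desc.simps Let_def ..
  then show ?thesis unfolding n \<open>e0 = e\<close> by simp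
qed

lemma comp_asc_earliest:
  assumes "finite E" "inj_on fst E" "e \<in> E" "\<forall>e'\<in>E. fst e \<le> fst (e'::event)"
  shows "comp_asc (card E) E k = comp_asc (card E - 1) (E - {e}) (level_map (participants (snd e)) k)"
proof -
  have "card E \<noteq> 0" using assms(1,3) by auto
  then obtain n where n: "card E = Suc n" using not0_implies_Suc by blast
  define e0 where "e0 = (SOME e. e \<in> E \<and> (\<forall>e'\<in>E. fst e \<le> fst e'))"
  have e0: "e0 \<in> E \<and> (\<forall>e'\<in>E. fst e0 \<le> fst e')" unfolding e0_def
    by (rule someI[of _ e]) (use assms(3,4) in blast)
  then have "fst e0 = fst e" using assms(3,4) by (meson antisym)
  then have "e0 = e" using e0 assms(2,3) unfolding inj_on_def by blast
  have "comp_asc (Suc n) E k = comp_asc n (E - {e0}) (level_map (participants (snd e0)) k)"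
    unfolding e0_def comp_asc.simps Let_def ..
  then show ?thesis unfolding n \<open>e0 = e\<close> by simp
qed
lemma comp_desc_split:
  assumes "finite E" "inj_on fst E" "E = E1 \<union> E2" "\<forall>a\<in>E1. \<forall>b\<in>E2. fst a < fst (b::event)"
  shows "comp_desc (card E) E k = comp_desc (card E1) E1 (comp_desc (card E2) E2 k)"
  using assms
proof (induction "card E2" arbitrary: E E2 k)
  case 0
  then have "E2 = {}" using infinite_super[of E2 E] by auto
  then show ?case using 0 by simp
next
  case (Suc n)
  have f2: "finite E2" using Suc.prems(1,3) by simp
  have ne: "E2 \<noteq> {}" using Suc.hyps(2) by auto
  obtain e where e: "e \<in> E2" "\<forall>e'\<in>E2. fst e' \<le> fst e" using ex_latest_event[OF f2 ne] by blast
  have eE: "e \<in> E" "\<forall>e'\<in>E. fst e' \<le> fst e" using e Suc.prems(3,4) by (auto, fastforce)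
  have eE1: "e \<notin> E1" using Suc.prems(4) e(1) by fastforce
  have s1: "comp_desc (card E) E k = comp_desc (card E - 1) (E - {e}) (level_map (participants (snd e)) k)"
    by (rule comp_desc_latest[OF Suc.prems(1,2) eE])
  have s2: "comp_desc (card E2) E2 k = comp_desc (card E2 - 1) (E2 - {e}) (level_map (participants (snd e)) k)"
    by (rule comp_desc_latest[OF f2 inj_on_subset[OF Suc.prems(2)] e]) (use Suc.prems(3) in auto)
  have "comp_desc (card (E - {e})) (E - {e}) (level_map (participants (snd e)) k) =
     comp_desc (card E1) E1 (comp_desc (card (E2 - {e})) (E2 - {e}) (level_map (participants (snd e)) k))"
  proof (rule Suc.hyps(1))
    show "n = card (E2 - {e})" using Suc.hyps(2) e(1) f2 by simp
    show "finite (E - {e})" using Suc.prems(1) by simp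
    show "inj_on fst (E - {e})" using inj_on_subset[OF Suc.prems(2)] by blast
    show "E - {e} = E1 \<union> (E2 - {e})" using Suc.prems(3) eE1 by blast
    show "\<forall>a\<in>E1. \<forall>b\<in>E2 - {e}. fst a < fst b" using Suc.prems(4) by blast
  qed
  then show ?case using s1 s2 eE(1) e(1) Suc.prems(1) f2 by simp
qed

lemma comp_asc_split:
  assumes "finite E" "inj_on fst E" "E = E1 \<union> E2" "\<forall>a\<in>E1. \<forall>b\<in>E2. fst a < fst (b::event)"
  shows "comp_asc (card E) E k = comp_asc (card E2) E2 (comp_asc (card E1) E1 k)"
  using assms
proof (induction "card E1" arbitrary: E E1 k)
  case 0
  then have "E1 = {}" using infinite_super[of E1 E] by auto
  then show ?case using 0 by simp
next
  case (Suc n)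
  have f1: "finite E1" using Suc.prems(1,3) by simp
  have ne: "E1 \<noteq> {}" using Suc.hyps(2) by auto
  obtain e where e: "e \<in> E1" "\<forall>e'\<in>E1. fst e \<le> fst e'" using ex_earliest_event[OF f1 ne] by blast
  have eE: "e \<in> E" "\<forall>e'\<in>E. fst e \<le> fst e'" using e Suc.prems(3,4) by (auto, fastforce)
  have eE2: "e \<notin> E2" using Suc.prems(4) e(1) by fastforce
  have s1: "comp_asc (card E) E k = comp_asc (card E - 1) (E - {e}) (level_map (participants (snd e)) k)"
    by (rule comp_asc_earliest[OF Suc.prems(1,2) eE])
  have s2: "comp_asc (card E1) E1 k = comp_asc (card E1 - 1) (E1 - {e}) (level_map (participants (snd e)) k)"
    by (rule comp_asc_earliest[OF f1 inj_on_subset[OF Suc.prems(2)] e]) (use Suc.prems(3) in auto)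
  have "comp_asc (card (E - {e})) (E - {e}) (level_map (participants (snd e)) k) =
     comp_asc (card E2) E2 (comp_asc (card (E1 - {e})) (E1 - {e}) (level_map (participants (snd e)) k))"
  proof (rule Suc.hyps(1))
    show "n = card (E1 - {e})" using Suc.hyps(2) e(1) f1 by simp
    show "finite (E - {e})" using Suc.prems(1) by simp
    show "inj_on fst (E - {e})" using inj_on_subset[OF Suc.prems(2)] by blast
    show "E - {e} = (E1 - {e}) \<union> E2" using Suc.prems(3) eE2 by blast
    show "\<forall>a\<in>E1 - {e}. \<forall>b\<in>E2. fst a < fst b" using Suc.prems(4) by blast
  qed
  then show ?case using s1 s2 eE(1) e(1) Suc.prems(1) f1 by simp
qed

lemma comp_asc_le: "comp_asc n E k \<le> k"
proof (induction n arbitrary: E k)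
  case 0 then show ?case by simp
next
  case (Suc n)
  have "comp_asc (Suc n) E k = comp_asc n (E - {SOME e. e \<in> E \<and> (\<forall>e'\<in>E. fst e \<le> fst e')})
     (level_map (participants (snd (SOME e. e \<in> E \<and> (\<forall>e'\<in>E. fst e \<le> fst e')))) k)"
    by (simp add: Let_def)
  also have "\<dots> \<le> level_map (participants (snd (SOME e. e \<in> E \<and> (\<forall>e'\<in>E. fst e \<le> fst e')))) k"
    by (rule Suc.IH)
  also have "\<dots> \<le> k" by (rule level_map_le)
  finally show ?case .
qed

lemma comp_desc_relevant:
  assumes "finite E" "inj_on fst E" "k \<le> J"
  shows "comp_desc (card E) E k = comp_desc (card {e\<in>E. relevant J e}) {e\<in>E. relevant J e} k"
  using assms
proof (induction "card E" arbitrary: E k)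
  case 0 then show ?case by simp
next
  case (Suc n)
  have ne: "E \<noteq> {}" using Suc.hyps(2) by auto
  obtain e where e: "e \<in> E" "\<forall>e'\<in>E. fst e' \<le> fst e" using ex_latest_event[OF Suc.prems(1) ne] by blast
  let ?x = "level_map (participants (snd e)) k"
  let ?G = "{e'\<in>E - {e}. relevant J e'}"
  let ?F = "{e\<in>E. relevant J e}"
  have cE: "card (E - {e}) = card E - 1" using e(1) Suc.prems(1) by (simp add: card_Diff_singleton)
  have s1: "comp_desc (card E) E k = comp_desc (card (E - {e})) (E - {e}) ?x"
    unfolding cE by (rule comp_desc_latest[OF Suc.prems(1,2) e])
  have IH: "comp_desc (card (E - {e})) (E - {e}) x = comp_desc (card ?G) ?G x" if "x \<le> J" for x
  proof (rule Suc.hyps(1))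
    show "n = card (E - {e})" using Suc.hyps(2) cE by simp
    show "finite (E - {e})" using Suc.prems(1) by simp
    show "inj_on fst (E - {e})" using inj_on_subset[OF Suc.prems(2)] by blast
  qed (rule that)
  show ?case
  proof (cases "relevant J e")
    case True
    have eF: "e \<in> ?F" using e(1) True by simp
    have fF: "finite ?F" using Suc.prems(1) by simp
    have cF: "card (?F - {e}) = card ?F - 1" using eF fF by (simp add: card_Diff_singleton)
    have s2: "comp_desc (card ?F) ?F k = comp_desc (card (?F - {e})) (?F - {e}) ?x"
      unfolding cF by (rule comp_desc_latest) (use Suc.prems e True inj_on_subset[OF Suc.prems(2), of ?F] in auto)
    have G: "?G = ?F - {e}" by auto
    have xJ: "?x \<le> J" using level_map_le[of _ k] Suc.prems(3) by (rule order_trans)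
    show ?thesis unfolding s1 IH[OF xJ] s2 G ..
  next
    case False
    have fx: "?x = k"
      by (rule level_map_fixpoint[OF zero_notin_participants _ Suc.prems(3)]) (use False in \<open>simp add: relevant_def\<close>)
    have G: "?G = ?F" using False by auto
    show ?thesis unfolding s1 fx IH[OF Suc.prems(3)] G ..
  qed
qed

lemma comp_asc_relevant:
  assumes "finite E" "inj_on fst E" "k \<le> J"
  shows "comp_asc (card E) E k = comp_asc (card {e\<in>E. relevant J e}) {e\<in>E. relevant J e} k"
  using assms
proof (induction "card E" arbitrary: E k)
  case 0 then show ?case by simp
next
  case (Suc n)
  have ne: "E \<noteq> {}" using Suc.hyps(2) by auto
  obtain e where e: "e \<in> E" "\<forall>e'\<in>E. fst e \<le> fst e'" using ex_earliest_event[OF Suc.prems(1) ne] by blast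
  let ?x = "level_map (participants (snd e)) k"
  let ?G = "{e'\<in>E - {e}. relevant J e'}"
  let ?F = "{e\<in>E. relevant J e}"
  have cE: "card (E - {e}) = card E - 1" using e(1) Suc.prems(1) by (simp add: card_Diff_singleton)
  have s1: "comp_asc (card E) E k = comp_asc (card (E - {e})) (E - {e}) ?x"
    unfolding cE by (rule comp_asc_earliest[OF Suc.prems(1,2) e])
  have IH: "comp_asc (card (E - {e})) (E - {e}) x = comp_asc (card ?G) ?G x" if "x \<le> J" for x
  proof (rule Suc.hyps(1))
    show "n = card (E - {e})" using Suc.hyps(2) cE by simp
    show "finite (E - {e})" using Suc.prems(1) by simp
    show "inj_on fst (E - {e})" using inj_on_subset[OF Suc.prems(2)] by blast
  qed (rule that)
  show ?case
  proof (cases "relevant J e")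
    case True
    have eF: "e \<in> ?F" using e(1) True by simp
    have fF: "finite ?F" using Suc.prems(1) by simp
    have cF: "card (?F - {e}) = card ?F - 1" using eF fF by (simp add: card_Diff_singleton)
    have s2: "comp_asc (card ?F) ?F k = comp_asc (card (?F - {e})) (?F - {e}) ?x"
      unfolding cF by (rule comp_asc_earliest) (use Suc.prems e True inj_on_subset[OF Suc.prems(2), of ?F] in auto)
    have G: "?G = ?F - {e}" by auto
    have xJ: "?x \<le> J" using level_map_le[of _ k] Suc.prems(3) by (rule order_trans)
    show ?thesis unfolding s1 IH[OF xJ] s2 G ..
  next
    case False
    have fx: "?x = k"
      by (rule level_map_fixpoint[OF zero_notin_participants _ Suc.prems(3)]) (use False in \<open>simp add: relevant_def\<close>)
    have G: "?G = ?F" using False by auto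
    show ?thesis unfolding s1 fx IH[OF Suc.prems(3)] G ..
  qed
qed

section \<open>Cells and cell maps\<close>

definition cell :: "real \<Rightarrow> real \<Rightarrow> nat \<Rightarrow> real set" where
  "cell a h i = {a + real i * h <.. a + real (Suc i) * h}"

text \<open>Restricted to the levels 1..J, a relevant mark is determined by its pattern, the set of
(at least two) participating levels among 1..J.\<close>

definition patterns :: "nat \<Rightarrow> nat set set" where
  "patterns J = {S. S \<subseteq> {1..J} \<and> 2 \<le> card S}"

definition pattern_marks :: "nat \<Rightarrow> nat set \<Rightarrow> (nat \<Rightarrow> bool) set" where
  "pattern_marks J S = {b. participants b \<inter> {1..J} = S}"

definition relevant_marks :: "nat \<Rightarrow> (nat \<Rightarrow> bool) set" where
  "relevant_marks J = {b. 2 \<le> card (participants b \<inter> {1..J})}"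

text \<open>y (i, S) counts the events with pattern S in the i-th cell. The cell map applies the level
map of a pattern that occurs in the cell; it is only meaningful when the cell carries at most one
relevant event, as the choice is arbitrary otherwise.\<close>

definition cell_map :: "nat \<Rightarrow> (nat \<times> nat set \<Rightarrow> nat) \<Rightarrow> nat \<Rightarrow> nat \<Rightarrow> nat" where
  "cell_map J y i k = (if \<exists>S\<in>patterns J. 1 \<le> y (i,S)
      then level_map (SOME S. S \<in> patterns J \<and> 1 \<le> y (i,S)) k else k)"

fun desc_cell_maps :: "nat \<Rightarrow> (nat \<times> nat set \<Rightarrow> nat) \<Rightarrow> nat \<Rightarrow> nat \<Rightarrow> nat" where
  "desc_cell_maps J y 0 k = k"
| "desc_cell_maps J y (Suc n) k = desc_cell_maps J y n (cell_map J y n k)"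

fun asc_cell_maps :: "nat \<Rightarrow> (nat \<times> nat set \<Rightarrow> nat) \<Rightarrow> nat \<Rightarrow> nat \<Rightarrow> nat" where
  "asc_cell_maps J y 0 k = k"
| "asc_cell_maps J y (Suc n) k = cell_map J y n (asc_cell_maps J y n k)"

lemma relevant_iff_relevant_marks: "relevant J e \<longleftrightarrow> snd e \<in> relevant_marks J"
  by (simp add: relevant_def relevant_marks_def)

lemma finite_patterns: "finite (patterns J)"
  by (rule finite_subset[of _ "Pow {1..J}"]) (auto simp: patterns_def)

lemma relevant_marks_UN: "A \<times> relevant_marks J = (\<Union>S\<in>patterns J. A \<times> pattern_marks J S)"
  by (auto simp: relevant_marks_def pattern_marks_def patterns_def)

lemma pattern_marks_subset: "S \<in> patterns J \<Longrightarrow> pattern_marks J S \<subseteq> relevant_marks J"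
  by (auto simp: pattern_marks_def relevant_marks_def patterns_def)

lemma pattern_marks_disjoint: "S \<noteq> S' \<Longrightarrow> pattern_marks J S \<inter> pattern_marks J S' = {}"
  by (auto simp: pattern_marks_def)

lemma card_relevant_marks_sum:
  assumes "finite (X \<inter> (A \<times> relevant_marks J))"
  shows "card (X \<inter> (A \<times> relevant_marks J)) = (\<Sum>S\<in>patterns J. card (X \<inter> (A \<times> pattern_marks J S)))"
proof -
  have "X \<inter> (A \<times> relevant_marks J) = (\<Union>S\<in>patterns J. X \<inter> (A \<times> pattern_marks J S))" using relevant_marks_UN[of A J] by auto
  moreover have "card (\<Union>S\<in>patterns J. X \<inter> (A \<times> pattern_marks J S)) = (\<Sum>S\<in>patterns J. card (X \<inter> (A \<times> pattern_marks J S)))"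
  proof (rule card_UN_disjoint[OF finite_patterns])
    show "\<forall>S\<in>patterns J. finite (X \<inter> (A \<times> pattern_marks J S))"
    proof
      fix S assume "S \<in> patterns J"
      then have "X \<inter> (A \<times> pattern_marks J S) \<subseteq> X \<inter> (A \<times> relevant_marks J)"
        by (auto simp: pattern_marks_def relevant_marks_def patterns_def)
      then show "finite (X \<inter> (A \<times> pattern_marks J S))" using assms by (rule finite_subset)
    qed
    show "\<forall>S\<in>patterns J. \<forall>S'\<in>patterns J. S \<noteq> S' \<longrightarrow> X \<inter> (A \<times> pattern_marks J S) \<inter> (X \<inter> (A \<times> pattern_marks J S')) = {}"
      using pattern_marks_disjoint by blast
  qed
  ultimately show ?thesis by simp
qed

lemma comp_single_event_eq_cell_map:
  assumes fin: "finite C" and one: "card C \<le> 1" and rel: "\<forall>e\<in>C. relevant J e"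
    and y: "\<forall>S\<in>patterns J. y (n,S) = card (C \<inter> (UNIV \<times> pattern_marks J S))" and k: "k \<le> J"
  shows "comp_desc (card C) C k = cell_map J y n k" "comp_asc (card C) C k = cell_map J y n k"
proof -
  have "comp_desc (card C) C k = cell_map J y n k \<and> comp_asc (card C) C k = cell_map J y n k"
  proof (cases "card C = 0")
    case True
    then have C0: "C = {}" using fin by simp
    then have "\<forall>S\<in>patterns J. y (n,S) = 0" using y by simp
    then show ?thesis using C0 by (simp add: cell_map_def)
  next
    case False
    then have "card C = 1" using one by simp
    then obtain e where Ce: "C = {e}" using card_1_singletonE by blast
    define S0 where "S0 = participants (snd e) \<inter> {1..J}"
    have relS0: "2 \<le> card S0" using rel Ce by (simp add: relevant_def S0_def)
    have S0L: "S0 \<in> patterns J" using relS0 by (simp add: patterns_def S0_def)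
    have yS: "y (n,S) = (if S = S0 then 1 else 0)" if "S \<in> patterns J" for S
    proof (cases "S = S0")
      case True
      then have "C \<inter> (UNIV \<times> pattern_marks J S) = {e}" using Ce by (auto simp: pattern_marks_def S0_def)
      then show ?thesis using y that True by simp
    next
      case False
      then have "C \<inter> (UNIV \<times> pattern_marks J S) = {}" using Ce by (auto simp: pattern_marks_def S0_def)
      then show ?thesis using y that False by simp
    qed
    have ex: "\<exists>S\<in>patterns J. 1 \<le> y (n,S)" using S0L yS by auto
    have some: "(SOME S. S \<in> patterns J \<and> 1 \<le> y (n,S)) = S0"
      by (rule some_equality) (use S0L yS in \<open>auto split: if_splits\<close>)
    have S0ne: "S0 \<noteq> {}" using relS0 by auto
    have lm: "level_map S0 k = level_map (participants (snd e)) k"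
      using level_map_restrict[OF zero_notin_participants k, of "snd e"] S0ne by (simp add: S0_def)
    have sd: "(SOME x. x \<in> {e} \<and> (\<forall>e'\<in>{e}. fst e' \<le> fst x)) = e" by (rule some_equality) auto
    have sa: "(SOME x. x \<in> {e} \<and> (\<forall>e'\<in>{e}. fst x \<le> fst e')) = e" by (rule some_equality) auto
    have c1: "card C = Suc 0" using Ce by simp
    have d: "comp_desc (card C) C k = level_map (participants (snd e)) k"
      unfolding c1 comp_desc.simps Let_def unfolding Ce sd by simp
    have a: "comp_asc (card C) C k = level_map (participants (snd e)) k"
      unfolding c1 comp_asc.simps Let_def unfolding Ce sa by simp
    have cm: "cell_map J y n k = level_map (participants (snd e)) k"
      unfolding cell_map_def using ex some lm by simp
    show ?thesis using d a cm by simp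
  qed
  then show "comp_desc (card C) C k = cell_map J y n k" "comp_asc (card C) C k = cell_map J y n k" by auto
qed

lemma cell_map_le: "cell_map J y n k \<le> k"
  by (simp add: cell_map_def level_map_le)

lemma comp_desc_eq_desc_cell_maps:
  assumes fin: "finite E" and inj: "inj_on fst E"
    and win: "\<forall>e\<in>E. a < fst e \<and> fst e \<le> a + real M * h"
    and rel: "\<forall>e\<in>E. relevant J e"
    and one: "\<forall>i<M. card (E \<inter> (cell a h i \<times> UNIV)) \<le> 1"
    and y: "\<forall>i<M. \<forall>S\<in>patterns J. y (i,S) = card (E \<inter> (cell a h i \<times> pattern_marks J S))"
    and hpos: "0 \<le> h"
  shows "n \<le> M \<Longrightarrow> k \<le> J \<Longrightarrow>
    comp_desc (card {e\<in>E. fst e \<le> a + real n * h}) {e\<in>E. fst e \<le> a + real n * h} k = desc_cell_maps J y n k"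
proof (induction n arbitrary: k)
  case 0
  have E0: "{e\<in>E. fst e \<le> a + real 0 * h} = {}" using win by force
  show ?case unfolding E0 by simp
next
  case (Suc n)
  let ?En = "{e\<in>E. fst e \<le> a + real n * h}"
  let ?C = "E \<inter> (cell a h n \<times> UNIV)"
  have eq: "{e\<in>E. fst e \<le> a + real (Suc n) * h} = ?En \<union> ?C"
  proof -
    have "a + real n * h \<le> a + real (Suc n) * h" using hpos by (simp add: algebra_simps)
    then show ?thesis using win by (auto simp: cell_def)
  qed
  have sp: "comp_desc (card (?En \<union> ?C)) (?En \<union> ?C) k = comp_desc (card ?En) ?En (comp_desc (card ?C) ?C k)"
  proof (rule comp_desc_split)
    have sub: "?En \<union> ?C \<subseteq> E" by blast
    show "finite (?En \<union> ?C)" using finite_subset[OF sub fin] .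
    show "inj_on fst (?En \<union> ?C)" using inj_on_subset[OF inj sub] .
    show "\<forall>a\<in>?En. \<forall>b\<in>?C. fst a < fst b" by (auto simp: cell_def)
  qed simp
  have nM: "n < M" using Suc.prems(1) by simp
  have yC: "\<forall>S\<in>patterns J. y (n,S) = card (?C \<inter> (UNIV \<times> pattern_marks J S))"
  proof
    fix S assume "S \<in> patterns J"
    then have "y (n,S) = card (E \<inter> (cell a h n \<times> pattern_marks J S))" using y nM by blast
    also have "E \<inter> (cell a h n \<times> pattern_marks J S) = ?C \<inter> (UNIV \<times> pattern_marks J S)" by blast
    finally show "y (n,S) = card (?C \<inter> (UNIV \<times> pattern_marks J S))" .
  qed
  have fC: "finite ?C" using fin by simp
  have oC: "card ?C \<le> 1" using one nM by blast
  have rC: "\<forall>e\<in>?C. relevant J e" using rel by blast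
  have cs: "comp_desc (card ?C) ?C k = cell_map J y n k"
    by (rule comp_single_event_eq_cell_map(1)[OF fC oC rC yC Suc.prems(2)])
  have "comp_desc (card ?En) ?En (cell_map J y n k) = desc_cell_maps J y n (cell_map J y n k)"
    by (rule Suc.IH) (use Suc.prems cell_map_le[of J y n k] in auto)
  then show ?case using eq sp cs by simp
qed

lemma comp_asc_eq_asc_cell_maps:
  assumes fin: "finite E" and inj: "inj_on fst E"
    and win: "\<forall>e\<in>E. a < fst e \<and> fst e \<le> a + real M * h"
    and rel: "\<forall>e\<in>E. relevant J e"
    and one: "\<forall>i<M. card (E \<inter> (cell a h i \<times> UNIV)) \<le> 1"
    and y: "\<forall>i<M. \<forall>S\<in>patterns J. y (i,S) = card (E \<inter> (cell a h i \<times> pattern_marks J S))"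
    and hpos: "0 \<le> h"
  shows "n \<le> M \<Longrightarrow> k \<le> J \<Longrightarrow>
    comp_asc (card {e\<in>E. fst e \<le> a + real n * h}) {e\<in>E. fst e \<le> a + real n * h} k = asc_cell_maps J y n k"
proof (induction n arbitrary: k)
  case 0
  have E0: "{e\<in>E. fst e \<le> a + real 0 * h} = {}" using win by force
  show ?case unfolding E0 by simp
next
  case (Suc n)
  let ?En = "{e\<in>E. fst e \<le> a + real n * h}"
  let ?C = "E \<inter> (cell a h n \<times> UNIV)"
  have eq: "{e\<in>E. fst e \<le> a + real (Suc n) * h} = ?En \<union> ?C"
  proof -
    have "a + real n * h \<le> a + real (Suc n) * h" using hpos by (simp add: algebra_simps)
    then show ?thesis using win by (auto simp: cell_def)
  qed
  have sp: "comp_asc (card (?En \<union> ?C)) (?En \<union> ?C) k = comp_asc (card ?C) ?C (comp_asc (card ?En) ?En k)"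
  proof (rule comp_asc_split)
    have sub: "?En \<union> ?C \<subseteq> E" by blast
    show "finite (?En \<union> ?C)" using finite_subset[OF sub fin] .
    show "inj_on fst (?En \<union> ?C)" using inj_on_subset[OF inj sub] .
    show "\<forall>a\<in>?En. \<forall>b\<in>?C. fst a < fst b" by (auto simp: cell_def)
  qed simp
  have IH: "comp_asc (card ?En) ?En k = asc_cell_maps J y n k"
    by (rule Suc.IH) (use Suc.prems in auto)
  have nM: "n < M" using Suc.prems(1) by simp
  have yC: "\<forall>S\<in>patterns J. y (n,S) = card (?C \<inter> (UNIV \<times> pattern_marks J S))"
  proof
    fix S assume "S \<in> patterns J"
    then have "y (n,S) = card (E \<inter> (cell a h n \<times> pattern_marks J S))" using y nM by blast
    also have "E \<inter> (cell a h n \<times> pattern_marks J S) = ?C \<inter> (UNIV \<times> pattern_marks J S)" by blast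
    finally show "y (n,S) = card (?C \<inter> (UNIV \<times> pattern_marks J S))" .
  qed
  have fC: "finite ?C" using fin by simp
  have oC: "card ?C \<le> 1" using one nM by blast
  have rC: "\<forall>e\<in>?C. relevant J e" using rel by blast
  have pJ: "asc_cell_maps J y n k \<le> J" using comp_asc_le[of "card ?En" ?En k] IH Suc.prems(2) by simp
  have cs: "comp_asc (card ?C) ?C (asc_cell_maps J y n k) = cell_map J y n (asc_cell_maps J y n k)"
    by (rule comp_single_event_eq_cell_map(2)[OF fC oC rC yC pJ])
  then show ?case using eq sp IH by simp
qed

lemma cell_map_cong: "(\<And>S. S \<in> patterns J \<Longrightarrow> y (i,S) = y' (i,S)) \<Longrightarrow> cell_map J y i k = cell_map J y' i k"
proof -
  assume h: "\<And>S. S \<in> patterns J \<Longrightarrow> y (i,S) = y' (i,S)"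
  have e1: "(\<exists>S\<in>patterns J. 1 \<le> y (i,S)) = (\<exists>S\<in>patterns J. 1 \<le> y' (i,S))" using h by auto
  have e2: "(SOME S. S \<in> patterns J \<and> 1 \<le> y (i,S)) = (SOME S. S \<in> patterns J \<and> 1 \<le> y' (i,S))"
    by (rule arg_cong[where f=Eps]) (use h in auto)
  show ?thesis unfolding cell_map_def e1 e2 ..
qed

lemma desc_cell_maps_cong: "(\<And>i S. i < n \<Longrightarrow> S \<in> patterns J \<Longrightarrow> y (i,S) = y' (i,S)) \<Longrightarrow> desc_cell_maps J y n k = desc_cell_maps J y' n k"
proof (induction n arbitrary: k)
  case 0 then show ?case by simp
next
  case (Suc n)
  have "cell_map J y n k = cell_map J y' n k" by (rule cell_map_cong) (use Suc.prems in auto)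
  then show ?case using Suc by simp
qed

lemma asc_cell_maps_cong: "(\<And>i S. i < n \<Longrightarrow> S \<in> patterns J \<Longrightarrow> y (i,S) = y' (i,S)) \<Longrightarrow> asc_cell_maps J y n k = asc_cell_maps J y' n k"
proof (induction n arbitrary: k)
  case 0 then show ?case by simp
next
  case (Suc n)
  have "asc_cell_maps J y n k = asc_cell_maps J y' n k" by (rule Suc.IH) (use Suc.prems in auto)
  moreover have "cell_map J y n x = cell_map J y' n x" for x by (rule cell_map_cong) (use Suc.prems in auto)
  ultimately show ?case by simp
qed

lemma desc_cell_maps_split_reversed:
  assumes "n \<le> M"
  shows "desc_cell_maps J y M k = desc_cell_maps J y (M - n) (asc_cell_maps J (\<lambda>(i,S). y (M - 1 - i, S)) n k)"
  using assms
proof (induction n)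
  case 0 then show ?case by simp
next
  case (Suc n)
  have c: "cell_map J (\<lambda>(i,S). y (M - 1 - i, S)) n x = cell_map J y (M - Suc n) x" for x
    by (simp add: cell_map_def)
  have "M - n = Suc (M - Suc n)" using Suc.prems by simp
  then show ?case using Suc c by simp
qed

text \<open>Reversing the order of the cells turns the lookdown composition (latest cell first) into
the coalescent composition (earliest cell first).\<close>

lemma desc_cell_maps_eq_asc_reversed: "desc_cell_maps J y M k = asc_cell_maps J (\<lambda>(i,S). y (M - 1 - i, S)) M k"
  using desc_cell_maps_split_reversed[of M M J y k] by simp

lemma cell_nonneg: "0 \<le> a \<Longrightarrow> 0 \<le> h \<Longrightarrow> cell a h i \<subseteq> {0..}"
  by (auto simp: cell_def) (smt (verit) mult_nonneg_nonneg of_nat_0_le_iff)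

lemma cell_disjoint:
  assumes "0 < h" "i \<noteq> j"
  shows "cell a h i \<inter> cell a h j = {}"
proof -
  have *: "cell a h i \<inter> cell a h j = {}" if "i < j" for i j
  proof -
    have "real (Suc i) \<le> real j" using that by simp
    then have "a + real (Suc i) * h \<le> a + real j * h" using assms(1) by (simp add: mult_right_mono)
    then show ?thesis by (auto simp: cell_def)
  qed
  show ?thesis
  proof (cases "i < j")
    case True then show ?thesis by (rule *)
  next
    case False then have "j < i" using assms(2) by simp
    then show ?thesis using *[of j i] by blast
  qed
qed

lemma ex_cell_mem:
  assumes h: "0 < h" and t: "a < \<tau>" "\<tau> \<le> a + real M * h"
  shows "\<exists>i<M. \<tau> \<in> cell a h i"
proof -
  define q where "q = (\<tau> - a) / h"
  have q0: "0 < q" using t h by (simp add: q_def)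
  have qM: "q \<le> real M" unfolding q_def using t h by (simp add: pos_divide_le_eq)
  have ci: "real_of_int (ceiling q) - 1 < q" "q \<le> real_of_int (ceiling q)" using ceiling_correct[of q] by auto
  have c1i: "1 \<le> ceiling q" using q0 by simp
  define c where "c = nat (ceiling q)"
  have rc: "real c = real_of_int (ceiling q)" using c1i by (simp add: c_def)
  have "nat 1 \<le> nat (ceiling q)" using c1i by (rule nat_mono)
  then have c1: "1 \<le> c" by (simp add: c_def)
  have "ceiling q \<le> int M" by (rule ceiling_le) (use qM in simp)
  then have cM: "c \<le> M" using qM by (simp add: c_def)
  define i where "i = c - 1"
  have ic: "real i = real c - 1" "real (Suc i) = real c" using c1 by (simp_all add: i_def of_nat_diff)
  have "real i < (\<tau> - a) / h" using ci(1) rc ic by (simp add: q_def)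
  then have l: "real i * h < \<tau> - a" using h by (simp add: pos_less_divide_eq)
  have "(\<tau> - a) / h \<le> real (Suc i)" using ci(2) rc ic by (simp add: q_def)
  then have u: "\<tau> - a \<le> real (Suc i) * h" using h by (simp add: pos_divide_le_eq)
  have "\<tau> \<in> cell a h i" using l u by (simp add: cell_def)
  moreover have "i < M" using cM c1 by (simp add: i_def)
  ultimately show ?thesis by blast
qed

section \<open>Ancestors in the lookdown and blocks of the coalescent\<close>

lemma cell_subset_window:
  assumes "0 < h" "i < M"
  shows "cell a h i \<subseteq> {a<..a + real M * h}"
proof
  fix \<tau> assume "\<tau> \<in> cell a h i"
  then have t: "a + real i * h < \<tau>" "\<tau> \<le> a + real (Suc i) * h" by (auto simp: cell_def)
  have "0 \<le> real i * h" using assms by simp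
  moreover have "real (Suc i) * h \<le> real M * h" using assms by (intro mult_right_mono) auto
  ultimately show "\<tau> \<in> {a<..a + real M * h}" using t by auto
qed

lemma relevant_mono: "j \<le> J \<Longrightarrow> relevant j e \<Longrightarrow> relevant J e"
proof -
  assume jJ: "j \<le> J" and r: "relevant j e"
  have "card (participants (snd e) \<inter> {1..j}) \<le> card (participants (snd e) \<inter> {1..J})"
    by (rule card_mono) (use jJ in auto)
  then show ?thesis using r by (simp add: relevant_def)
qed

definition relevant_window :: "event set \<Rightarrow> real \<Rightarrow> real \<Rightarrow> nat \<Rightarrow> event set" where
  "relevant_window X a b J = X \<inter> ({a<..b} \<times> relevant_marks J)"

lemma relevant_window_cells:
  assumes h: "0 < h"
  shows "\<forall>e\<in>relevant_window X a (a + real M * h) J. a < fst e \<and> fst e \<le> a + real M * h" and "\<forall>e\<in>relevant_window X a (a + real M * h) J. relevant J e"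
    and "i < M \<Longrightarrow> B \<subseteq> relevant_marks J \<Longrightarrow> relevant_window X a (a + real M * h) J \<inter> (cell a h i \<times> B) = X \<inter> (cell a h i \<times> B)"
    and "relevant_window X a (a + real M * h) J \<inter> (cell a h i \<times> UNIV) = relevant_window X a (a + real M * h) J \<inter> (cell a h i \<times> relevant_marks J)"
proof -
  show "\<forall>e\<in>relevant_window X a (a + real M * h) J. a < fst e \<and> fst e \<le> a + real M * h" "\<forall>e\<in>relevant_window X a (a + real M * h) J. relevant J e"
    "relevant_window X a (a + real M * h) J \<inter> (cell a h i \<times> UNIV) = relevant_window X a (a + real M * h) J \<inter> (cell a h i \<times> relevant_marks J)"
    by (auto simp: relevant_window_def relevant_iff_relevant_marks)
  show "relevant_window X a (a + real M * h) J \<inter> (cell a h i \<times> B) = X \<inter> (cell a h i \<times> B)" if "i < M" "B \<subseteq> relevant_marks J"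
    using cell_subset_window[OF h that(1), of a] that(2) by (auto simp: relevant_window_def)
qed

lemma inj_on_fst_relevant_window:
  assumes h: "0 < h" and fin: "finite (relevant_window X a (a + real M * h) J)"
    and one: "\<forall>i<M. card (X \<inter> (cell a h i \<times> relevant_marks J)) \<le> 1"
  shows "inj_on fst (relevant_window X a (a + real M * h) J)"
proof (rule inj_onI)
  let ?E = "relevant_window X a (a + real M * h) J"
  fix x y assume xy: "x \<in> ?E" "y \<in> ?E" "fst x = fst y"
  then obtain i where i: "i < M" "fst x \<in> cell a h i"
    using ex_cell_mem[OF h] relevant_window_cells(1)[OF h, where X=X and a=a and M=M and J=J] by blast
  have "x \<in> X \<inter> (cell a h i \<times> relevant_marks J)" "y \<in> X \<inter> (cell a h i \<times> relevant_marks J)"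
    using xy i by (auto simp: relevant_window_def mem_Times_iff)
  moreover have "card (X \<inter> (cell a h i \<times> relevant_marks J)) \<le> 1" using one i(1) by blast
  moreover have "finite (X \<inter> (cell a h i \<times> relevant_marks J))"
    using fin relevant_window_cells(3)[OF h i(1) order_refl, where X=X, symmetric] by simp
  ultimately show "x = y" using card_le_Suc0_iff_eq[of "X \<inter> (cell a h i \<times> relevant_marks J)"] by auto
qed

lemma comp_desc_relevant_window:
  assumes h: "0 < h" and fin: "finite (relevant_window X a (a + real M * h) J)"
    and one: "\<forall>i<M. card (X \<inter> (cell a h i \<times> relevant_marks J)) \<le> 1" and k: "k \<le> J"
  shows "comp_desc (card (relevant_window X a (a + real M * h) J)) (relevant_window X a (a + real M * h) J) k
    = desc_cell_maps J (\<lambda>(i,S). card (X \<inter> (cell a h i \<times> pattern_marks J S))) M k"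
proof -
  let ?E = "relevant_window X a (a + real M * h) J"
  note E = relevant_window_cells[OF h, where X=X and a=a and M=M and J=J]
  have "{e\<in>?E. fst e \<le> a + real M * h} = ?E" using E(1) by auto
  moreover have "comp_desc (card {e\<in>?E. fst e \<le> a + real M * h}) {e\<in>?E. fst e \<le> a + real M * h} k
      = desc_cell_maps J (\<lambda>(i,S). card (X \<inter> (cell a h i \<times> pattern_marks J S))) M k"
    using one k E(3)[OF _ pattern_marks_subset] E(3)[OF _ order_refl]
    by (intro comp_desc_eq_desc_cell_maps[OF fin inj_on_fst_relevant_window[OF h fin one] E(1,2)])
      (simp_all add: E(4) less_imp_le[OF h])
  ultimately show ?thesis by simp
qed

lemma comp_asc_relevant_window:
  assumes h: "0 < h" and fin: "finite (relevant_window X a (a + real M * h) J)"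
    and one: "\<forall>i<M. card (X \<inter> (cell a h i \<times> relevant_marks J)) \<le> 1" and k: "k \<le> J"
  shows "comp_asc (card (relevant_window X a (a + real M * h) J)) (relevant_window X a (a + real M * h) J) k
    = asc_cell_maps J (\<lambda>(i,S). card (X \<inter> (cell a h i \<times> pattern_marks J S))) M k"
proof -
  let ?E = "relevant_window X a (a + real M * h) J"
  note E = relevant_window_cells[OF h, where X=X and a=a and M=M and J=J]
  have "{e\<in>?E. fst e \<le> a + real M * h} = ?E" using E(1) by auto
  moreover have "comp_asc (card {e\<in>?E. fst e \<le> a + real M * h}) {e\<in>?E. fst e \<le> a + real M * h} k
      = asc_cell_maps J (\<lambda>(i,S). card (X \<inter> (cell a h i \<times> pattern_marks J S))) M k"
    using one k E(3)[OF _ pattern_marks_subset] E(3)[OF _ order_refl]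
    by (intro comp_asc_eq_asc_cell_maps[OF fin inj_on_fst_relevant_window[OF h fin one] E(1,2)])
      (simp_all add: E(4) less_imp_le[OF h])
  ultimately show ?thesis by simp
qed

definition ancestors_upto :: "event set \<Rightarrow> real \<Rightarrow> real \<Rightarrow> nat \<Rightarrow> nat set" where
  "ancestors_upto X r s J = {ancestor_level X r s j | j. 1 \<le> j \<and> j \<le> J}"

lemma ancestors_upto_eq_desc_cell_maps:
  assumes h: "0 < h" and s: "s = r + real M * h"
    and fin: "finite (relevant_window X r s J)"
    and one: "\<forall>i<M. card (X \<inter> (cell r h i \<times> relevant_marks J)) \<le> 1"
  shows "ancestors_upto X r s J = desc_cell_maps J (\<lambda>(i,S). card (X \<inter> (cell r h i \<times> pattern_marks J S))) M ` {1..J}"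
proof -
  let ?E = "relevant_window X r s J"
  have inj: "inj_on fst ?E" using inj_on_fst_relevant_window[OF h _ one] fin s by simp
  have "ancestor_level X r s j = desc_cell_maps J (\<lambda>(i,S). card (X \<inter> (cell r h i \<times> pattern_marks J S))) M j"
    if "1 \<le> j" "j \<le> J" for j
  proof -
    have "{e\<in>X. r < fst e \<and> fst e \<le> s \<and> relevant j e} = {e\<in>?E. relevant j e}"
      using relevant_mono[OF that(2)] by (auto simp: relevant_window_def relevant_iff_relevant_marks)
    then have "ancestor_level X r s j = comp_desc (card {e\<in>?E. relevant j e}) {e\<in>?E. relevant j e} j"
      using fin by (simp add: ancestor_level_def Let_def)
    also have "\<dots> = comp_desc (card ?E) ?E j" by (rule comp_desc_relevant[symmetric, OF fin inj order_refl])
    also have "\<dots> = desc_cell_maps J (\<lambda>(i,S). card (X \<inter> (cell r h i \<times> pattern_marks J S))) M j"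
      using comp_desc_relevant_window[OF h _ one that(2)] fin s by simp
    finally show ?thesis .
  qed
  then show ?thesis by (force simp: ancestors_upto_def image_def)
qed

lemma ancestors_upto_mono: "J \<le> J' \<Longrightarrow> ancestors_upto X r s J \<subseteq> ancestors_upto X r s J'"
  by (auto simp: ancestors_upto_def)

lemma finite_ancestors_upto: "finite (ancestors_upto X r s J)"
proof -
  have "ancestors_upto X r s J = (\<lambda>j. ancestor_level X r s j) ` {1..J}" by (auto simp: ancestors_upto_def)
  then show ?thesis by simp
qed

lemma ancestors_upto_large:
  assumes "\<not> N_nk_less X n k c"
  shows "\<exists>J. \<forall>J'\<ge>J. c \<le> real (card (ancestors_upto X ((real k - 1) / 2 ^ n) (real k / 2 ^ n) J'))"
proof -
  let ?r = "(real k - 1) / 2 ^ n" and ?s = "real k / 2 ^ n"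
  let ?A = "ancestors X ?r ?s"
  have "\<exists>F. finite F \<and> F \<subseteq> ?A \<and> c \<le> real (card F)"
  proof (cases "finite ?A")
    case True
    then have "c \<le> real (card ?A)" using assms by (simp add: N_nk_less_def Let_def)
    then show ?thesis using True by blast
  next
    case False
    obtain F where F: "F \<subseteq> ?A" "finite F" "card F = nat (ceiling c)"
      using infinite_arbitrarily_large[OF False] by blast
    have "c \<le> real (nat (ceiling c))" by linarith
    then have "c \<le> real (card F)" using F(3) by simp
    then show ?thesis using F(1,2) by blast
  qed
  then obtain F where F: "finite F" "F \<subseteq> ?A" "c \<le> real (card F)" by blast
  have "\<forall>x\<in>F. \<exists>j. 1 \<le> j \<and> x = ancestor_level X ?r ?s j" using F(2) by (auto simp: ancestors_def)
  then have "\<exists>jf. \<forall>x\<in>F. 1 \<le> jf x \<and> x = ancestor_level X ?r ?s (jf x)" by (rule bchoice)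
  then obtain jf where jf: "\<forall>x\<in>F. 1 \<le> jf x \<and> x = ancestor_level X ?r ?s (jf x)" by blast
  define J where "J = Max (insert 0 (jf ` F))"
  have "F \<subseteq> ancestors_upto X ?r ?s J"
  proof
    fix x assume "x \<in> F"
    then have "jf x \<le> J" using F(1) by (simp add: J_def)
    then show "x \<in> ancestors_upto X ?r ?s J" using jf \<open>x \<in> F\<close> by (auto simp: ancestors_upto_def)
  qed
  then have "\<forall>J'\<ge>J. F \<subseteq> ancestors_upto X ?r ?s J'" using ancestors_upto_mono by blast
  then have cF: "\<forall>J'\<ge>J. card F \<le> card (ancestors_upto X ?r ?s J')" using finite_ancestors_upto card_mono by blast
  have "\<forall>J'\<ge>J. c \<le> real (card (ancestors_upto X ?r ?s J'))"
  proof (intro allI impI)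
    fix J' assume "J \<le> J'"
    then have "real (card F) \<le> real (card (ancestors_upto X ?r ?s J'))" using cF by simp
    then show "c \<le> real (card (ancestors_upto X ?r ?s J'))" using F(3) by linarith
  qed
  then show ?thesis by blast
qed

lemma block_rank_eq_comp_asc:
  assumes fin: "finite (relevant_window X 0 t J)" and inj: "inj_on fst (relevant_window X 0 t J)"
    and nz: "X \<inter> ({0} \<times> relevant_marks J) = {}"
    and j: "1 \<le> j" "j \<le> J" and t': "0 \<le> t'" "t' \<le> t"
  shows "block_rank X t' j = comp_asc (card (relevant_window X 0 t' J)) (relevant_window X 0 t' J) j"
proof -
  let ?E = "relevant_window X 0 t' J"
  have sub: "?E \<subseteq> relevant_window X 0 t J" using t' by (auto simp: relevant_window_def)
  have "{e\<in>X. 0 \<le> fst e \<and> fst e \<le> t' \<and> relevant j e} = {e\<in>?E. relevant j e}"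
  proof (intro equalityI subsetI)
    fix e assume e: "e \<in> {e\<in>X. 0 \<le> fst e \<and> fst e \<le> t' \<and> relevant j e}"
    then have J: "snd e \<in> relevant_marks J" using relevant_mono[OF j(2)] relevant_iff_relevant_marks by blast
    have "fst e \<noteq> 0"
    proof
      assume "fst e = 0"
      then have "e \<in> X \<inter> ({0} \<times> relevant_marks J)" using e J by (cases e) auto
      then show False using nz by blast
    qed
    then show "e \<in> {e\<in>?E. relevant j e}" using e J by (cases e) (auto simp: relevant_window_def)
  qed (auto simp: relevant_window_def)
  moreover have fE: "finite ?E" using finite_subset[OF sub fin] .
  ultimately have "block_rank X t' j = comp_asc (card {e\<in>?E. relevant j e}) {e\<in>?E. relevant j e} j"
    by (simp add: block_rank_def Let_def)
  also have "\<dots> = comp_asc (card ?E) ?E j"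
    by (rule comp_asc_relevant[symmetric, OF fE inj_on_subset[OF inj sub] order_refl])
  finally show ?thesis .
qed

lemma block_ranks_eq_asc_cell_maps:
  assumes h: "0 < h" and t: "t = real M * h"
    and fin: "finite (relevant_window X 0 t J)" and nz: "X \<inter> ({0} \<times> relevant_marks J) = {}"
    and one: "\<forall>i<M. card (X \<inter> (cell 0 h i \<times> relevant_marks J)) \<le> 1"
  shows "block_rank X t ` {1..J} = asc_cell_maps J (\<lambda>(i,S). card (X \<inter> (cell 0 h i \<times> pattern_marks J S))) M ` {1..J}"
proof (rule image_cong)
  have inj: "inj_on fst (relevant_window X 0 t J)" using inj_on_fst_relevant_window[OF h _ one] fin t by simp
  fix j assume j: "j \<in> {1..J}"
  have "block_rank X t j = comp_asc (card (relevant_window X 0 t J)) (relevant_window X 0 t J) j"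
    by (rule block_rank_eq_comp_asc[OF fin inj nz]) (use j h t in auto)
  also have "\<dots> = asc_cell_maps J (\<lambda>(i,S). card (X \<inter> (cell 0 h i \<times> pattern_marks J S))) M j"
    using comp_asc_relevant_window[OF h _ one, of j] fin t j by simp
  finally show "block_rank X t j = asc_cell_maps J (\<lambda>(i,S). card (X \<inter> (cell 0 h i \<times> pattern_marks J S))) M j" .
qed simp

lemma card_block_ranks_antimono:
  assumes fin: "finite (relevant_window X 0 t J)" and inj: "inj_on fst (relevant_window X 0 t J)"
    and nz: "X \<inter> ({0} \<times> relevant_marks J) = {}" and t': "0 \<le> t'" "t' \<le> t"
  shows "card (block_rank X t ` {1..J}) \<le> card (block_rank X t' ` {1..J})"
proof -
  let ?E = "relevant_window X 0 t J" and ?E1 = "relevant_window X 0 t' J" and ?E2 = "relevant_window X t' t J"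
  have "block_rank X t j = comp_asc (card ?E2) ?E2 (block_rank X t' j)" if "j \<in> {1..J}" for j
  proof -
    have "?E = ?E1 \<union> ?E2" using t' by (auto simp: relevant_window_def)
    then have "comp_asc (card ?E) ?E j = comp_asc (card ?E2) ?E2 (comp_asc (card ?E1) ?E1 j)"
      by (intro comp_asc_split[OF fin inj]) (auto simp: relevant_window_def)
    then show ?thesis
      using that block_rank_eq_comp_asc[OF fin inj nz _ _ t'] block_rank_eq_comp_asc[OF fin inj nz _ _ _ order_refl] t'
      by simp
  qed
  then have "block_rank X t ` {1..J} = comp_asc (card ?E2) ?E2 ` block_rank X t' ` {1..J}"
    by (auto simp: image_image intro!: image_cong)
  then show ?thesis by (simp add: card_image_le)
qed

lemma T_hit_ge:
  assumes fin: "finite (relevant_window X 0 t J)" and inj: "inj_on fst (relevant_window X 0 t J)"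
    and nz: "X \<inter> ({0} \<times> relevant_marks J) = {}"
    and big: "m < card (block_rank X t ` {1..J})"
  shows "ennreal t \<le> T_hit X m"
  unfolding T_hit_def
proof (rule Inf_greatest)
  fix x assume "x \<in> {ennreal t' |t'. 0 \<le> t' \<and> finite (coal_blocks X t') \<and> card (coal_blocks X t') \<le> m}"
  then obtain t' where x: "x = ennreal t'" "0 \<le> t'" "finite (coal_blocks X t')" "card (coal_blocks X t') \<le> m" by blast
  show "ennreal t \<le> x"
  proof (rule ccontr)
    assume "\<not> ennreal t \<le> x"
    then have "\<not> t \<le> t'" using x(1) ennreal_leI by blast
    then have "t' < t" by linarith
    have "card (block_rank X t ` {1..J}) \<le> card (block_rank X t' ` {1..J})"
      by (rule card_block_ranks_antimono[OF fin inj nz x(2)]) (use \<open>t' < t\<close> in simp)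
    also have "\<dots> \<le> card (coal_blocks X t')"
      by (rule card_mono[OF x(3)]) (auto simp: coal_blocks_def)
    finally show False using x(4) big by simp
  qed
qed

definition regular_events :: "event set \<Rightarrow> bool" where
  "regular_events X \<longleftrightarrow>
     (\<forall>J N. finite (X \<inter> ({0..real N} \<times> relevant_marks J))) \<and> (\<forall>J. X \<inter> ({0} \<times> relevant_marks J) = {})"

lemma regular_events_finite:
  assumes "regular_events X" "Y \<subseteq> {0..real N}" "B \<subseteq> relevant_marks J"
  shows "finite (X \<inter> (Y \<times> B))"
  using assms by (auto simp: regular_events_def intro: finite_subset[of _ "X \<inter> ({0..real N} \<times> relevant_marks J)"])

lemma cell_subset_interval:
  assumes "0 < h" "i < M" "0 \<le> a" "a + real M * h \<le> real N"
  shows "cell a h i \<subseteq> {0..real N}"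
  using cell_subset_window[OF assms(1,2), of a] assms(3,4) by auto

definition cell_counts :: "event set \<Rightarrow> ('i \<Rightarrow> event set) \<Rightarrow> 'i set \<Rightarrow> 'i \<Rightarrow> nat" where
  "cell_counts X A I = (\<lambda>idx\<in>I. card (X \<inter> A idx))"

definition many_ancestors_counts :: "nat \<Rightarrow> nat \<Rightarrow> real \<Rightarrow> (nat \<times> nat set \<Rightarrow> nat) set" where
  "many_ancestors_counts J M c =
     {v. (\<forall>i<M. (\<Sum>S\<in>patterns J. v (i,S)) \<le> 1) \<and> c \<le> real (card (desc_cell_maps J v M ` {1..J}))}"

lemma lookdown_counts_in_many_ancestors:
  assumes g: "regular_events X" and h: "0 < h" and r: "0 \<le> r" and s: "s = r + real M * h" and sN: "s \<le> real N"
    and nb: "\<forall>i<M. card (X \<inter> (cell r h i \<times> relevant_marks J)) \<le> 1" and cA: "c \<le> real (card (ancestors_upto X r s J))"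
  shows "cell_counts X (\<lambda>(i,S). cell r h i \<times> pattern_marks J S) ({..<M} \<times> patterns J) \<in> many_ancestors_counts J M c"
proof -
  define V where "V = cell_counts X (\<lambda>(i,S). cell r h i \<times> pattern_marks J S) ({..<M} \<times> patterns J)"
  define y where "y = (\<lambda>(i,S). card (X \<inter> (cell r h i \<times> pattern_marks J S)))"
  have "{r<..s} \<subseteq> {0..real N}" using r sN by auto
  then have fin: "finite (relevant_window X r s J)"
    unfolding relevant_window_def by (rule regular_events_finite[OF g _ order_refl])
  have A: "ancestors_upto X r s J = desc_cell_maps J y M ` {1..J}" unfolding y_def by (rule ancestors_upto_eq_desc_cell_maps[OF h s fin nb])
  have Vy: "V (i,S) = y (i,S)" if "i < M" "S \<in> patterns J" for i S using that by (simp add: V_def y_def cell_counts_def)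
  have ph: "desc_cell_maps J V M k = desc_cell_maps J y M k" for k by (rule desc_cell_maps_cong) (use Vy in auto)
  have sum: "(\<Sum>S\<in>patterns J. V (i,S)) \<le> 1" if i: "i < M" for i
  proof -
    have cN: "cell r h i \<subseteq> {0..real N}" by (rule cell_subset_interval[OF h i r]) (use s sN in simp)
    have fc: "finite (X \<inter> (cell r h i \<times> relevant_marks J))" by (rule regular_events_finite[OF g cN order_refl])
    have "(\<Sum>S\<in>patterns J. V (i,S)) = (\<Sum>S\<in>patterns J. card (X \<inter> (cell r h i \<times> pattern_marks J S)))"
      by (rule sum.cong) (use i in \<open>auto simp: V_def cell_counts_def\<close>)
    also have "\<dots> = card (X \<inter> (cell r h i \<times> relevant_marks J))" by (rule card_relevant_marks_sum[symmetric, OF fc])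
    finally show ?thesis using nb i by simp
  qed
  have "c \<le> real (card (desc_cell_maps J V M ` {1..J}))" using cA A ph by simp
  then show ?thesis using sum by (simp add: V_def[symmetric] many_ancestors_counts_def)
qed

lemma T_hit_ge_of_reversed_counts:
  assumes g: "regular_events X" and h: "0 < h" and t: "t = real M * h" and tN: "t \<le> real N"
    and V: "cell_counts X (\<lambda>(i,S). cell 0 h (M - 1 - i) \<times> pattern_marks J S) ({..<M} \<times> patterns J)
      \<in> many_ancestors_counts J M c"
    and mm: "real mm < c"
  shows "ennreal t \<le> T_hit X mm"
proof -
  define V where "V = cell_counts X (\<lambda>(i,S). cell 0 h (M - 1 - i) \<times> pattern_marks J S) ({..<M} \<times> patterns J)"
  define y where "y = (\<lambda>(i,S). card (X \<inter> (cell 0 h i \<times> pattern_marks J S)))"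
  have Vb: "\<forall>i<M. (\<Sum>S\<in>patterns J. V (i,S)) \<le> 1" "c \<le> real (card (desc_cell_maps J V M ` {1..J}))"
    using V by (simp_all add: V_def many_ancestors_counts_def)
  have one: "\<forall>j<M. card (X \<inter> (cell 0 h j \<times> relevant_marks J)) \<le> 1"
  proof (intro allI impI)
    fix j assume j: "j < M"
    define i where "i = M - 1 - j"
    have i: "i < M" "M - 1 - i = j" using j by (auto simp: i_def)
    have cN: "cell 0 h j \<subseteq> {0..real N}" by (rule cell_subset_interval[OF h j]) (use t tN in simp_all)
    have fc: "finite (X \<inter> (cell 0 h j \<times> relevant_marks J))" by (rule regular_events_finite[OF g cN order_refl])
    have "(\<Sum>S\<in>patterns J. V (i,S)) = (\<Sum>S\<in>patterns J. card (X \<inter> (cell 0 h j \<times> pattern_marks J S)))"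
      by (rule sum.cong) (use i in \<open>auto simp: V_def cell_counts_def\<close>)
    also have "\<dots> = card (X \<inter> (cell 0 h j \<times> relevant_marks J))" by (rule card_relevant_marks_sum[symmetric, OF fc])
    finally have eq: "(\<Sum>S\<in>patterns J. V (i,S)) = card (X \<inter> (cell 0 h j \<times> relevant_marks J))" .
    show "card (X \<inter> (cell 0 h j \<times> relevant_marks J)) \<le> 1" using Vb(1)[rule_format, OF i(1)] eq by simp
  qed
  have "{0<..t} \<subseteq> {0..real N}" using tN by auto
  then have fin: "finite (relevant_window X 0 t J)"
    unfolding relevant_window_def by (rule regular_events_finite[OF g _ order_refl])
  have inj: "inj_on fst (relevant_window X 0 t J)" using inj_on_fst_relevant_window[OF h _ one] fin t by simp
  have nz: "X \<inter> ({0} \<times> relevant_marks J) = {}" using g by (simp add: regular_events_def)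
  have br: "block_rank X t ` {1..J} = asc_cell_maps J y M ` {1..J}" unfolding y_def by (rule block_ranks_eq_asc_cell_maps[OF h t fin nz one])
  have ph: "desc_cell_maps J V M k = asc_cell_maps J y M k" for k
  proof -
    have "desc_cell_maps J V M k = asc_cell_maps J (\<lambda>(i,S). V (M - 1 - i, S)) M k" by (rule desc_cell_maps_eq_asc_reversed)
    also have "\<dots> = asc_cell_maps J y M k"
    proof (rule asc_cell_maps_cong)
      fix i S assume "i < M" "S \<in> patterns J"
      then have "M - 1 - i < M" "M - 1 - (M - 1 - i) = i" by auto
      then show "(\<lambda>(i,S). V (M - 1 - i, S)) (i,S) = y (i,S)" using \<open>S \<in> patterns J\<close> by (simp add: V_def y_def cell_counts_def)
    qed
    finally show ?thesis .
  qed
  have "c \<le> real (card (block_rank X t ` {1..J}))" using Vb(2) br ph by simp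
  then have big: "mm < card (block_rank X t ` {1..J})" using mm by linarith
  show ?thesis by (rule T_hit_ge[OF fin inj nz big])
qed

section \<open>The intensity of the driving events\<close>

lemma space_mark_space: "space mark_space = UNIV"
  by (auto simp: mark_space_def space_PiM)

lemma sets_mark_intensity: "sets (mark_intensity \<Lambda>) = sets mark_space"
  unfolding mark_intensity_def
  by (subst sets_measure_of[OF sets.space_closed]) (rule sets.sigma_sets_eq)

lemma coordinates_sets: "finite K \<Longrightarrow> {b\<in>space mark_space. \<forall>k\<in>K. b k \<in> X k} \<in> sets mark_space"
proof -
  assume K: "finite K"
  have "{b\<in>space mark_space. \<forall>k\<in>K. b k \<in> X k} = prod_emb UNIV (\<lambda>_. count_space UNIV) K (Pi\<^sub>E K X)"
    by (auto simp: prod_emb_def mark_space_def space_PiM PiE_def Pi_def)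
  also have "\<dots> \<in> sets mark_space" unfolding mark_space_def
    by (rule sets_PiM_I) (use K in auto)
  finally show ?thesis .
qed

lemma pattern_marks_sets: "pattern_marks J S \<in> sets mark_space"
proof -
  have "pattern_marks J S = (if S \<subseteq> {1..J} then {b\<in>space mark_space. \<forall>k\<in>{1..J}. b k \<in> {k \<in> S}} else {})"
    by (auto simp: pattern_marks_def participants_def space_mark_space)
  then show ?thesis using coordinates_sets[of "{1..J}" "\<lambda>k. {k \<in> S}"] by simp
qed

lemma relevant_marks_sets: "relevant_marks J \<in> sets mark_space"
proof -
  have "relevant_marks J = (\<Union>S\<in>patterns J. pattern_marks J S)"
  proof
    show "relevant_marks J \<subseteq> (\<Union>S\<in>patterns J. pattern_marks J S)"
    proof
      fix x assume x: "x \<in> relevant_marks J"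
      then have "participants x \<inter> {1..J} \<in> patterns J" by (simp add: relevant_marks_def patterns_def)
      moreover have "x \<in> pattern_marks J (participants x \<inter> {1..J})" by (simp add: pattern_marks_def)
      ultimately show "x \<in> (\<Union>S\<in>patterns J. pattern_marks J S)" by blast
    qed
    show "(\<Union>S\<in>patterns J. pattern_marks J S) \<subseteq> relevant_marks J"
      by (auto simp: relevant_marks_def pattern_marks_def patterns_def)
  qed
  also have "\<dots> \<in> sets mark_space"
    using finite_patterns pattern_marks_sets by (intro sets.finite_UN) auto
  finally show ?thesis .
qed

definition mark_premeasure :: "real measure \<Rightarrow> (nat \<Rightarrow> bool) set \<Rightarrow> ennreal" where
  "mark_premeasure \<Lambda> B = emeasure \<Lambda> {0} *
            emeasure (count_space UNIV)
              {(i::nat, j::nat). 1 \<le> i \<and> i < j \<and> (\<lambda>k. k = i \<or> k = j) \<in> B}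
          + (\<integral>\<^sup>+x\<in>{0<..1}. ennreal (1 / x\<^sup>2) *
              emeasure (PiM UNIV (\<lambda>_::nat. measure_pmf (bernoulli_pmf x))) B \<partial>\<Lambda>)"

lemma mark_intensity_eq_measure_of: "mark_intensity \<Lambda> = measure_of (space mark_space) (sets mark_space) (mark_premeasure \<Lambda>)"
  unfolding mark_intensity_def mark_premeasure_def by simp

text \<open>measure_of yields the zero measure unless the set function is countably additive, so only
an upper bound is available without proving that.\<close>

lemma emeasure_mark_intensity_le: "emeasure (mark_intensity \<Lambda>) B \<le> mark_premeasure \<Lambda> B"
  unfolding mark_intensity_eq_measure_of emeasure_measure_of_conv by auto

lemma sets_bernoulli_marks: "sets (PiM UNIV (\<lambda>_::nat. measure_pmf (bernoulli_pmf x))) = sets mark_space"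
  unfolding mark_space_def by (rule sets_PiM_cong) auto

lemma emeasure_bernoulli_pair:
  assumes x: "0 \<le> x" "x \<le> 1" and ab: "a \<noteq> b"
  shows "emeasure (PiM UNIV (\<lambda>_::nat. measure_pmf (bernoulli_pmf x))) {\<omega>. \<omega> a \<and> \<omega> b} = ennreal (x * x)"
proof -
  interpret product_prob_space "\<lambda>_::nat. measure_pmf (bernoulli_pmf x)" UNIV
    by (rule product_prob_spaceI) (rule prob_space_measure_pmf)
  have "{\<omega>. \<omega> a \<and> \<omega> b} = {\<omega>\<in>space (PiM UNIV (\<lambda>_::nat. measure_pmf (bernoulli_pmf x))). \<forall>i\<in>{a,b}. \<omega> i \<in> {True}}"
    by (auto simp: space_PiM)
  also have "emeasure (PiM UNIV (\<lambda>_::nat. measure_pmf (bernoulli_pmf x))) \<dots> =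
      (\<Prod>i\<in>{a,b}. emeasure (measure_pmf (bernoulli_pmf x)) {True})"
    by (rule emeasure_PiM_Collect) auto
  also have "\<dots> = ennreal x * ennreal x" using ab x by (simp add: emeasure_pmf_single)
  finally show ?thesis using x by (simp add: ennreal_mult)
qed

lemma relevant_marks_subset_pairs: "relevant_marks J \<subseteq> (\<Union>p\<in>{p\<in>{1..J}\<times>{1..J}. fst p < snd p}. {\<omega>. \<omega> (fst p) \<and> \<omega> (snd p)})"
proof
  fix \<omega> assume "\<omega> \<in> relevant_marks J"
  then have c: "2 \<le> card (participants \<omega> \<inter> {1..J})" by (simp add: relevant_marks_def)
  have fin: "finite (participants \<omega> \<inter> {1..J})" by simp
  have "participants \<omega> \<inter> {1..J} \<noteq> {}" using c by auto
  then obtain u where u: "u \<in> participants \<omega> \<inter> {1..J}" by blast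
  have "card (participants \<omega> \<inter> {1..J} - {u}) = card (participants \<omega> \<inter> {1..J}) - 1"
    using u fin by (simp add: card_Diff_singleton)
  then have "1 \<le> card (participants \<omega> \<inter> {1..J} - {u})" using c by linarith
  then have "participants \<omega> \<inter> {1..J} - {u} \<noteq> {}" by (metis card.empty not_one_le_zero)
  then obtain v where v: "v \<in> participants \<omega> \<inter> {1..J}" "u \<noteq> v" by blast
  have uv: "\<omega> u" "\<omega> v" "u \<in> {1..J}" "v \<in> {1..J}" using u v by (auto simp: participants_def)
  show "\<omega> \<in> (\<Union>p\<in>{p\<in>{1..J}\<times>{1..J}. fst p < snd p}. {\<omega>. \<omega> (fst p) \<and> \<omega> (snd p)})"
  proof (cases "u < v")
    case True
    then have "(u,v) \<in> {p\<in>{1..J}\<times>{1..J}. fst p < snd p}" "\<omega> \<in> {\<omega>. \<omega> (fst (u,v)) \<and> \<omega> (snd (u,v))}"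
      using uv by auto
    then show ?thesis by blast
  next
    case False then have "v < u" using v(2) by simp
    then have "(v,u) \<in> {p\<in>{1..J}\<times>{1..J}. fst p < snd p}" "\<omega> \<in> {\<omega>. \<omega> (fst (v,u)) \<and> \<omega> (snd (v,u))}"
      using uv by auto
    then show ?thesis by blast
  qed
qed

lemma emeasure_bernoulli_relevant_marks:
  assumes x: "0 < x" "x \<le> 1"
  shows "emeasure (PiM UNIV (\<lambda>_::nat. measure_pmf (bernoulli_pmf x))) (relevant_marks J) \<le> ennreal (real (J * J) * (x * x))"
proof -
  let ?P = "PiM UNIV (\<lambda>_::nat. measure_pmf (bernoulli_pmf x))"
  let ?I = "{p\<in>{1..J}\<times>{1..J}. fst p < snd p}"
  let ?A = "\<lambda>p::nat\<times>nat. {\<omega>. \<omega> (fst p) \<and> \<omega> (snd p)}"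
  have fI: "finite ?I" by (rule finite_subset[of _ "{1..J}\<times>{1..J}"]) auto
  have Asets: "?A p \<in> sets ?P" for p
  proof -
    have "?A p = {b\<in>space mark_space. \<forall>k\<in>{fst p, snd p}. b k \<in> {True}}"
      by (auto simp: space_mark_space)
    also have "\<dots> \<in> sets mark_space" by (rule coordinates_sets) simp
    finally show ?thesis by (simp add: sets_bernoulli_marks)
  qed
  have "emeasure ?P (relevant_marks J) \<le> emeasure ?P (\<Union>p\<in>?I. ?A p)"
    by (rule emeasure_mono[OF relevant_marks_subset_pairs]) (use fI Asets in auto)
  also have "\<dots> \<le> (\<Sum>p\<in>?I. emeasure ?P (?A p))"
    by (rule emeasure_subadditive_finite[OF fI]) (use Asets in auto)
  also have "\<dots> = (\<Sum>p\<in>?I. ennreal (x * x))"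
    by (rule sum.cong) (use x emeasure_bernoulli_pair in auto)
  also have "\<dots> = of_nat (card ?I) * ennreal (x * x)" by simp
  also have "\<dots> \<le> of_nat (J * J) * ennreal (x * x)"
  proof -
    have "card ?I \<le> card ({1..J}\<times>{1..J})" by (rule card_mono) auto
    then have "card ?I \<le> J * J" by (simp add: card_cartesian_product)
    then have "(of_nat (card ?I) :: ennreal) \<le> of_nat (J * J)" by (rule of_nat_mono)
    then show ?thesis by (rule mult_right_mono) simp
  qed
  also have "\<dots> = ennreal (real (J * J) * (x * x))" using x by (simp add: ennreal_mult ennreal_of_nat_eq_real_of_nat)
  finally show ?thesis .
qed

text \<open>pair_measure is the product of the two factors on rectangles, or the zero measure if the
iterated integral is not countably additive; intensity_scale records which case occurs, and the
argument works in both.\<close>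

definition intensity_scale :: "real measure \<Rightarrow> ennreal" where
  "intensity_scale \<Lambda> = (if measure_space (space (restrict_space lborel {0::real..}) \<times> space (mark_intensity \<Lambda>))
      (sigma_sets (space (restrict_space lborel {0::real..}) \<times> space (mark_intensity \<Lambda>))
         {a \<times> b |a b. a \<in> sets (restrict_space lborel {0::real..}) \<and> b \<in> sets (mark_intensity \<Lambda>)})
      (\<lambda>X. \<integral>\<^sup>+x. (\<integral>\<^sup>+y. indicator X (x,y) \<partial>mark_intensity \<Lambda>) \<partial>restrict_space lborel {0::real..})
    then 1 else 0)"

lemma intensity_scale_0_or_1: "intensity_scale \<Lambda> = 0 \<or> intensity_scale \<Lambda> = 1"
  by (simp add: intensity_scale_def)

lemma intensity_scale_le_1: "intensity_scale \<Lambda> \<le> 1" by (simp add: intensity_scale_def)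

lemma event_intensity_Times:
  assumes I: "I \<in> sets borel" "I \<subseteq> {0..}" and B: "B \<in> sets mark_space"
  shows "I \<times> B \<in> sets (event_intensity \<Lambda>)"
    "emeasure (event_intensity \<Lambda>) (I \<times> B) = intensity_scale \<Lambda> * (emeasure lborel I * emeasure (mark_intensity \<Lambda>) B)"
proof -
  let ?R = "restrict_space lborel {0::real..}"
  let ?K = "mark_intensity \<Lambda>"
  have IR: "I \<in> sets ?R" using I by (subst sets_restrict_space_iff) auto
  have BK: "B \<in> sets ?K" using B by (simp add: sets_mark_intensity)
  show "I \<times> B \<in> sets (event_intensity \<Lambda>)"
    unfolding event_intensity_def using IR BK by (rule pair_measureI)
  have inner: "(\<integral>\<^sup>+y. indicator (I \<times> B) (x,y) \<partial>?K) = emeasure ?K B * indicator I x" for x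
  proof -
    have "(\<integral>\<^sup>+y. indicator (I \<times> B) (x,y) \<partial>?K) = (\<integral>\<^sup>+y. indicator I x * indicator B y \<partial>?K)"
      by (rule nn_integral_cong) (simp add: indicator_def)
    also have "\<dots> = indicator I x * emeasure ?K B" by (rule nn_integral_cmult_indicator[OF BK])
    finally show ?thesis by (simp add: mult.commute)
  qed
  have dbl: "(\<integral>\<^sup>+x. (\<integral>\<^sup>+y. indicator (I \<times> B) (x,y) \<partial>?K) \<partial>?R) = emeasure lborel I * emeasure ?K B"
  proof -
    have "(\<integral>\<^sup>+x. (\<integral>\<^sup>+y. indicator (I \<times> B) (x,y) \<partial>?K) \<partial>?R) = (\<integral>\<^sup>+x. emeasure ?K B * indicator I x \<partial>?R)"
      using inner by simp
    also have "\<dots> = emeasure ?K B * emeasure ?R I" by (rule nn_integral_cmult_indicator[OF IR])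
    also have "emeasure ?R I = emeasure lborel I" by (rule emeasure_restrict_space) (use I in auto)
    finally show ?thesis by (simp add: mult.commute)
  qed
  have gen: "I \<times> B \<in> sigma_sets (space ?R \<times> space ?K) {a \<times> b |a b. a \<in> sets ?R \<and> b \<in> sets ?K}"
    using IR BK by (intro sigma_sets.Basic) blast
  show "emeasure (event_intensity \<Lambda>) (I \<times> B) = intensity_scale \<Lambda> * (emeasure lborel I * emeasure (mark_intensity \<Lambda>) B)"
    unfolding event_intensity_def pair_measure_def emeasure_measure_of_conv
    using gen dbl by (simp add: intensity_scale_def)
qed

lemma cell_borel: "cell a h i \<in> sets borel" by (simp add: cell_def)

lemma emeasure_cell: "0 \<le> h \<Longrightarrow> emeasure lborel (cell a h i) = ennreal h"
proof -
  assume h: "0 \<le> h"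
  have "a + real i * h \<le> a + real (Suc i) * h" using h by (simp add: algebra_simps)
  then show ?thesis by (simp add: cell_def algebra_simps)
qed

lemma finite_relevant_pairs:
  "finite {(i::nat, j::nat). 1 \<le> i \<and> i < j \<and> (\<lambda>k. k = i \<or> k = j) \<in> relevant_marks J}"
proof (rule finite_subset[of _ "{0..J} \<times> {0..J}"])
  show "{(i, j). 1 \<le> i \<and> i < j \<and> (\<lambda>k. k = i \<or> k = j) \<in> relevant_marks J} \<subseteq> {0..J} \<times> {0..J}"
  proof
    fix p assume "p \<in> {(i, j). 1 \<le> i \<and> i < j \<and> (\<lambda>k. k = i \<or> k = j) \<in> relevant_marks J}"
    then obtain i j where ij: "p = (i, j)" and p: "1 \<le> i" "i < j" "(\<lambda>k. k = i \<or> k = j) \<in> relevant_marks J"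
      by auto
    have "j \<le> J"
    proof (rule ccontr)
      assume "\<not> j \<le> J"
      then have "participants (\<lambda>k. k = i \<or> k = j) \<inter> {1..J} \<subseteq> {i}" by (auto simp: participants_def)
      then have "card (participants (\<lambda>k. k = i \<or> k = j) \<inter> {1..J}) \<le> card {i}"
        by (intro card_mono) simp_all
      then show False using p(3) by (simp add: relevant_marks_def)
    qed
    then show "p \<in> {0..J} \<times> {0..J}" using ij p by auto
  qed
qed simp

text \<open>The factor x^2 bounding the probability of two participants among J levels cancels the
singularity of the intensity x^-2.\<close>

lemma bernoulli_relevant_marks_density_le:
  "ennreal (1 / x\<^sup>2) * emeasure (PiM UNIV (\<lambda>_::nat. measure_pmf (bernoulli_pmf x))) (relevant_marks J)
     * indicator {0<..1} x \<le> ennreal (real (J * J))"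
proof (cases "x \<in> {0<..1}")
  case True
  then have x: "0 < x" "x \<le> 1" by auto
  have "ennreal (1 / x\<^sup>2) * emeasure (PiM UNIV (\<lambda>_::nat. measure_pmf (bernoulli_pmf x))) (relevant_marks J)
      \<le> ennreal (1 / x\<^sup>2) * ennreal (real (J * J) * (x * x))"
    by (rule mult_left_mono[OF emeasure_bernoulli_relevant_marks[OF x]]) simp
  also have "\<dots> = ennreal (1 / x\<^sup>2 * (real (J * J) * (x * x)))"
    by (rule ennreal_mult[symmetric]) (use x in simp_all)
  also have "1 / x\<^sup>2 * (real (J * J) * (x * x)) = real (J * J)" using x by (simp add: power2_eq_square field_simps)
  finally show ?thesis using True by simp
qed simp

lemma mark_premeasure_relevant_marks_finite:
  assumes fin: "finite_measure \<Lambda>"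
  shows "mark_premeasure \<Lambda> (relevant_marks J) < \<infinity>"
proof -
  let ?S = "{(i::nat, j::nat). 1 \<le> i \<and> i < j \<and> (\<lambda>k. k = i \<or> k = j) \<in> relevant_marks J}"
  have "emeasure \<Lambda> {0} < \<infinity>" using finite_measure.emeasure_finite[OF fin] by (simp add: top.not_eq_extremum)
  then have single: "emeasure \<Lambda> {0} * emeasure (count_space UNIV) ?S < \<infinity>"
    using finite_relevant_pairs by (simp add: ennreal_mult_less_top of_nat_less_top)
  have "(\<integral>\<^sup>+x\<in>{0<..1}. ennreal (1 / x\<^sup>2) * emeasure (PiM UNIV (\<lambda>_::nat. measure_pmf (bernoulli_pmf x))) (relevant_marks J) \<partial>\<Lambda>)
      \<le> (\<integral>\<^sup>+x. ennreal (real (J * J)) \<partial>\<Lambda>)"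
    by (rule nn_integral_mono) (rule bernoulli_relevant_marks_density_le)
  also have "\<dots> = ennreal (real (J * J)) * emeasure \<Lambda> (space \<Lambda>)" by simp
  also have "\<dots> < \<infinity>" using finite_measure.emeasure_finite[OF fin, of "space \<Lambda>"]
    by (simp add: ennreal_mult_less_top top.not_eq_extremum)
  finally show ?thesis using single unfolding mark_premeasure_def by (simp add: ennreal_add_less_top)
qed

lemma emeasure_event_intensity_finite:
  assumes fin: "finite_measure \<Lambda>" and I: "I \<in> sets borel" "I \<subseteq> {0..}" "emeasure lborel I < \<infinity>"
    and B: "B \<in> sets mark_space" "B \<subseteq> relevant_marks J"
  shows "emeasure (event_intensity \<Lambda>) (I \<times> B) < \<infinity>"
proof -
  have "emeasure (mark_intensity \<Lambda>) B \<le> emeasure (mark_intensity \<Lambda>) (relevant_marks J)"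
    by (rule emeasure_mono[OF B(2)]) (simp add: sets_mark_intensity relevant_marks_sets)
  also have "\<dots> \<le> mark_premeasure \<Lambda> (relevant_marks J)" by (rule emeasure_mark_intensity_le)
  finally have mB: "emeasure (mark_intensity \<Lambda>) B < \<infinity>" using mark_premeasure_relevant_marks_finite[OF fin] by (simp add: le_less_trans)
  have ev: "intensity_scale \<Lambda> < \<infinity>" using intensity_scale_le_1[of \<Lambda>] by (rule le_less_trans) simp
  have "intensity_scale \<Lambda> * (emeasure lborel I * emeasure (mark_intensity \<Lambda>) B) < \<infinity>"
    using mB I(3) ev by (simp add: ennreal_mult_less_top)
  then show ?thesis using event_intensity_Times(2)[OF I(1,2) B(1)] by simp
qed

section \<open>Counts of a Poisson point process\<close>

lemma poisson_point_processD:
  assumes P: "poisson_point_process M Xi mu" and A: "A \<in> sets mu" "emeasure mu A < \<infinity>"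
  shows "prob_space M" "AE \<omega> in M. finite (Xi \<omega> \<inter> A)"
    "(\<lambda>\<omega>. card (Xi \<omega> \<inter> A)) \<in> measurable M (count_space UNIV)"
    "\<And>k. measure M {\<omega>\<in>space M. card (Xi \<omega> \<inter> A) = k} =
        (enn2real (emeasure mu A)) ^ k / fact k * exp (- enn2real (emeasure mu A))"
  using P A unfolding poisson_point_process_def by auto

lemma poisson_point_process_prob_ge2:
  assumes P: "poisson_point_process M Xi mu" and A: "A \<in> sets mu" "emeasure mu A < \<infinity>"
  shows "measure M {\<omega>\<in>space M. 2 \<le> card (Xi \<omega> \<inter> A)} \<le> (enn2real (emeasure mu A))\<^sup>2"
proof -
  note F = poisson_point_processD[OF P A]
  interpret prob_space M by (rule F(1))
  define \<mu> where "\<mu> = enn2real (emeasure mu A)"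
  have \<mu>0: "0 \<le> \<mu>" by (simp add: \<mu>_def)
  let ?C = "\<lambda>k. {\<omega>\<in>space M. card (Xi \<omega> \<inter> A) = k}"
  have Cs: "?C k \<in> sets M" for k using measurable_sets_Collect[OF F(3), of "\<lambda>n. n = k"] by simp
  have eq: "{\<omega>\<in>space M. 2 \<le> card (Xi \<omega> \<inter> A)} = space M - (?C 0 \<union> ?C 1)" by auto
  have "measure M (space M - (?C 0 \<union> ?C 1)) = 1 - measure M (?C 0 \<union> ?C 1)"
    by (rule prob_compl) (use Cs in auto)
  also have "measure M (?C 0 \<union> ?C 1) = measure M (?C 0) + measure M (?C 1)"
    by (rule finite_measure_Union) (use Cs in auto)
  also have "measure M (?C 0) = exp (- \<mu>)" using F(4)[of 0] by (simp add: \<mu>_def)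
  also have "measure M (?C 1) = \<mu> * exp (- \<mu>)" using F(4)[of 1] by (simp add: \<mu>_def)
  finally have m: "measure M {\<omega>\<in>space M. 2 \<le> card (Xi \<omega> \<inter> A)} = 1 - (exp (- \<mu>) + \<mu> * exp (- \<mu>))"
    using eq by simp
  have e: "1 - \<mu> \<le> exp (- \<mu>)" using exp_ge_add_one_self[of "- \<mu>"] by simp
  have "(1 + \<mu>) * (1 - \<mu>) \<le> (1 + \<mu>) * exp (- \<mu>)" by (rule mult_left_mono[OF e]) (use \<mu>0 in simp)
  then have "1 - \<mu>\<^sup>2 \<le> exp (- \<mu>) + \<mu> * exp (- \<mu>)" by (simp add: algebra_simps power2_eq_square)
  then show ?thesis using m by (simp add: \<mu>_def)
qed

lemma sets_PiM_nat_finite: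
  assumes I: "finite I" and B: "B \<subseteq> space (PiM I (\<lambda>_. count_space (UNIV::nat set)))"
  shows "B \<in> sets (PiM I (\<lambda>_. count_space (UNIV::nat set)))"
proof (rule sets.countable)
  show "countable B"
    by (rule countable_subset[OF B]) (auto simp: space_PiM intro!: countable_PiE I)
  fix v assume "v \<in> B"
  then have "v \<in> Pi\<^sub>E I (\<lambda>_. UNIV)" using B by (auto simp: space_PiM)
  then have "{v} = Pi\<^sub>E I (\<lambda>n. {v n})" by (simp add: PiE_singleton PiE_iff)
  then show "{v} \<in> sets (PiM I (\<lambda>_. count_space (UNIV::nat set)))" using I by simp
qed

lemma poisson_count_distr_eq:
  assumes P: "poisson_point_process M Xi mu"
    and A: "A \<in> sets mu" "emeasure mu A < \<infinity>" and A': "A' \<in> sets mu" "emeasure mu A' < \<infinity>"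
    and eq: "emeasure mu A = emeasure mu A'"
  shows "distr M (count_space UNIV) (\<lambda>\<omega>. card (Xi \<omega> \<inter> A)) = distr M (count_space UNIV) (\<lambda>\<omega>. card (Xi \<omega> \<inter> A'))"
proof (rule measure_eqI_countable[where A=UNIV])
  interpret prob_space M using P by (simp add: poisson_point_process_def)
  fix a :: nat
  have distr_eq: "emeasure (distr M (count_space UNIV) (\<lambda>\<omega>. card (Xi \<omega> \<inter> B))) {a} =
      ennreal (measure M {\<omega>\<in>space M. card (Xi \<omega> \<inter> B) = a})"
    if "B \<in> sets mu" "emeasure mu B < \<infinity>" for B
    using poisson_point_processD(3)[OF P that]
    by (subst emeasure_distr) (auto simp: emeasure_eq_measure vimage_def Int_def conj_commute)
  show "emeasure (distr M (count_space UNIV) (\<lambda>\<omega>. card (Xi \<omega> \<inter> A))) {a} =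
      emeasure (distr M (count_space UNIV) (\<lambda>\<omega>. card (Xi \<omega> \<inter> A'))) {a}"
    unfolding distr_eq[OF A] distr_eq[OF A']
    using poisson_point_processD(4)[OF P A, of a] poisson_point_processD(4)[OF P A', of a] eq by simp
qed auto

lemma poisson_counts_distr_PiM:
  fixes N :: nat
  assumes P: "poisson_point_process M Xi mu" and N: "0 < N"
    and B: "\<And>n. n < N \<Longrightarrow> B n \<in> sets mu \<and> emeasure mu (B n) < \<infinity>" and dB: "disjoint_family_on B {..<N}"
  shows "distr M (PiM {..<N} (\<lambda>_. count_space UNIV)) (\<lambda>\<omega>. \<lambda>n\<in>{..<N}. card (Xi \<omega> \<inter> B n)) =
         PiM {..<N} (\<lambda>n. distr M (count_space UNIV) (\<lambda>\<omega>. card (Xi \<omega> \<inter> B n)))"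
proof -
  interpret prob_space M using P by (simp add: poisson_point_process_def)
  have "\<forall>i<N. B i \<in> sets mu \<and> emeasure mu (B i) < \<infinity>" using B by blast
  then have "indep_vars (\<lambda>_. count_space UNIV) (\<lambda>n \<omega>. card (Xi \<omega> \<inter> B n)) {..<N}"
    using P dB unfolding poisson_point_process_def by blast
  then show ?thesis
    by (subst (asm) indep_vars_iff_distr_eq_PiM') (use N B poisson_point_processD(3)[OF P] in auto)
qed

lemma poisson_counts_vector_distr_eq:
  fixes N :: nat
  assumes P: "poisson_point_process M Xi mu"
    and B: "\<And>n. n < N \<Longrightarrow> B n \<in> sets mu \<and> emeasure mu (B n) < \<infinity>" and dB: "disjoint_family_on B {..<N}"
    and B': "\<And>n. n < N \<Longrightarrow> B' n \<in> sets mu \<and> emeasure mu (B' n) < \<infinity>" and dB': "disjoint_family_on B' {..<N}"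
    and eq: "\<And>n. n < N \<Longrightarrow> emeasure mu (B n) = emeasure mu (B' n)"
  shows "distr M (PiM {..<N} (\<lambda>_. count_space UNIV)) (\<lambda>\<omega>. \<lambda>n\<in>{..<N}. card (Xi \<omega> \<inter> B n)) =
         distr M (PiM {..<N} (\<lambda>_. count_space UNIV)) (\<lambda>\<omega>. \<lambda>n\<in>{..<N}. card (Xi \<omega> \<inter> B' n))"
proof (cases "N = 0")
  case False
  have "PiM {..<N} (\<lambda>n. distr M (count_space UNIV) (\<lambda>\<omega>. card (Xi \<omega> \<inter> B n))) =
      PiM {..<N} (\<lambda>n. distr M (count_space UNIV) (\<lambda>\<omega>. card (Xi \<omega> \<inter> B' n)))"
  proof (rule PiM_cong)
    fix n assume "n \<in> {..<N}"
    then show "distr M (count_space UNIV) (\<lambda>\<omega>. card (Xi \<omega> \<inter> B n)) =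
        distr M (count_space UNIV) (\<lambda>\<omega>. card (Xi \<omega> \<inter> B' n))"
      using B B' eq by (intro poisson_count_distr_eq[OF P]) auto
  qed simp
  with False show ?thesis
    by (simp add: poisson_counts_distr_PiM[OF P _ B dB] poisson_counts_distr_PiM[OF P _ B' dB'])
qed (simp add: restrict_def)

lemma poisson_counts_law_eq:
  fixes A A' :: "'i \<Rightarrow> 'e set"
  assumes P: "poisson_point_process M Xi mu" and I: "finite I"
    and A: "\<And>i. i \<in> I \<Longrightarrow> A i \<in> sets mu \<and> emeasure mu (A i) < \<infinity>"
    and A': "\<And>i. i \<in> I \<Longrightarrow> A' i \<in> sets mu \<and> emeasure mu (A' i) < \<infinity>"
    and dA: "disjoint_family_on A I" and dA': "disjoint_family_on A' I"
    and eq: "\<And>i. i \<in> I \<Longrightarrow> emeasure mu (A i) = emeasure mu (A' i)"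
  shows "measure M {\<omega>\<in>space M. (\<lambda>i\<in>I. card (Xi \<omega> \<inter> A i)) \<in> Q} =
         measure M {\<omega>\<in>space M. (\<lambda>i\<in>I. card (Xi \<omega> \<inter> A' i)) \<in> Q}"
proof -
  define N where "N = card I"
  obtain h where h: "bij_betw h {..<N} I"
    using ex_bij_betw_nat_finite[OF I] unfolding N_def atLeast0LessThan by blast
  define g where "g = inv_into {..<N} h"
  have hN: "\<And>n. n < N \<Longrightarrow> h n \<in> I" using h by (auto dest: bij_betwE)
  have g: "\<And>i. i \<in> I \<Longrightarrow> g i < N \<and> h (g i) = i"
    using h unfolding g_def bij_betw_def by (metis f_inv_into_f inv_into_into lessThan_iff)
  have disj: "disjoint_family_on (\<lambda>n. C (h n)) {..<N}" if C: "disjoint_family_on C I" for C :: "'i \<Rightarrow> 'e set"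
    unfolding disjoint_family_on_def
  proof (intro ballI impI)
    fix m n assume mn: "m \<in> {..<N}" "n \<in> {..<N}" "m \<noteq> n"
    then have "h m \<noteq> h n" using h by (auto simp: bij_betw_def dest: inj_onD)
    then show "C (h m) \<inter> C (h n) = {}" using C hN mn unfolding disjoint_family_on_def by auto
  qed
  let ?P = "PiM {..<N} (\<lambda>_. count_space (UNIV::nat set))"
  define V where "V C = (\<lambda>\<omega>. \<lambda>n\<in>{..<N}. card (Xi \<omega> \<inter> C (h n)))" for C :: "'i \<Rightarrow> 'e set"
  have V: "V C \<in> measurable M ?P" if "\<And>i. i \<in> I \<Longrightarrow> C i \<in> sets mu \<and> emeasure mu (C i) < \<infinity>" for C
    unfolding V_def using that hN poisson_point_processD(3)[OF P] by (intro measurable_restrict) auto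
  define Q' where "Q' = {v\<in>space ?P. (\<lambda>i\<in>I. v (g i)) \<in> Q}"
  have Q': "Q' \<in> sets ?P" by (rule sets_PiM_nat_finite) (auto simp: Q'_def)
  have preimage: "{\<omega>\<in>space M. (\<lambda>i\<in>I. card (Xi \<omega> \<inter> C i)) \<in> Q} = V C -` Q' \<inter> space M" for C
  proof -
    have "(\<lambda>i\<in>I. card (Xi \<omega> \<inter> C i)) = (\<lambda>i\<in>I. V C \<omega> (g i))" for \<omega>
      by (rule restrict_ext) (simp add: V_def g)
    moreover have "V C \<omega> \<in> space ?P" for \<omega> by (simp add: V_def space_PiM)
    ultimately show ?thesis by (auto simp: Q'_def)
  qed
  have "distr M ?P (V A) = distr M ?P (V A')"
    unfolding V_def by (rule poisson_counts_vector_distr_eq[OF P]) (use A A' hN eq disj dA dA' in auto)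
  then show ?thesis
    unfolding preimage using measure_distr[OF V[of A, OF A] Q'] measure_distr[OF V[of A', OF A'] Q'] by simp
qed

section \<open>Dyadic windows\<close>

definition window_start :: "nat \<Rightarrow> nat \<Rightarrow> real" where
  "window_start n k = (real k - 1) / 2 ^ n"

definition cell_width :: "nat \<Rightarrow> nat \<Rightarrow> real" where
  "cell_width n m = 1 / 2 ^ n / 2 ^ m"

definition cell_indices :: "nat \<Rightarrow> nat \<Rightarrow> (nat \<times> nat set) set" where
  "cell_indices J m = {..<2^m} \<times> patterns J"

definition lookdown_cells :: "nat \<Rightarrow> nat \<Rightarrow> nat \<Rightarrow> nat \<Rightarrow> nat \<times> nat set \<Rightarrow> event set" where
  "lookdown_cells n k J m = (\<lambda>(i,S). cell (window_start n k) (cell_width n m) i \<times> pattern_marks J S)"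

text \<open>Listed backwards in time, to match desc_cell_maps_eq_asc_reversed.\<close>

definition coalescent_cells :: "nat \<Rightarrow> nat \<Rightarrow> nat \<Rightarrow> nat \<times> nat set \<Rightarrow> event set" where
  "coalescent_cells n J m = (\<lambda>(i,S). cell 0 (cell_width n m) (2^m - 1 - i) \<times> pattern_marks J S)"

lemma cell_width_pos: "0 < cell_width n m"
  by (simp add: cell_width_def)

lemma two_power_mult_cell_width: "2 ^ m * cell_width n m = 1 / 2 ^ n"
  by (simp add: cell_width_def)

lemma window_end: "window_start n k + 2 ^ m * cell_width n m = real k / 2 ^ n"
  by (simp add: window_start_def cell_width_def diff_divide_distrib)

lemma window_start_nonneg: "1 \<le> k \<Longrightarrow> 0 \<le> window_start n k"
  by (simp add: window_start_def)

lemma disjoint_family_on_cells: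
  assumes h: "0 < h" and \<sigma>: "inj_on \<sigma> {..<K}"
  shows "disjoint_family_on (\<lambda>(i,S). cell a h (\<sigma> i) \<times> pattern_marks J S) ({..<K} \<times> patterns J)"
  unfolding disjoint_family_on_def
proof (intro ballI impI)
  fix p q assume p: "p \<in> {..<K} \<times> patterns J" and q: "q \<in> {..<K} \<times> patterns J" and pq: "p \<noteq> q"
  obtain i S i' S' where ij: "p = (i,S)" "q = (i',S')" by (cases p, cases q)
  show "(case p of (i,S) \<Rightarrow> cell a h (\<sigma> i) \<times> pattern_marks J S) \<inter>
      (case q of (i,S) \<Rightarrow> cell a h (\<sigma> i) \<times> pattern_marks J S) = {}"
  proof (cases "i = i'")
    case True
    then have "S \<noteq> S'" using pq ij by simp
    then show ?thesis using pattern_marks_disjoint[of S S' J] ij by auto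
  next
    case False
    then have "\<sigma> i \<noteq> \<sigma> i'" using \<sigma> p q ij by (auto dest: inj_onD)
    then show ?thesis using cell_disjoint[OF h, of "\<sigma> i" "\<sigma> i'" a] ij by auto
  qed
qed

lemma sets_Collect_restrict_nat_vector:
  assumes I: "finite I" and f: "\<And>i. i \<in> I \<Longrightarrow> f i \<in> measurable M (count_space (UNIV::nat set))"
  shows "{\<omega>\<in>space M. (\<lambda>i\<in>I. f i \<omega>) \<in> B} \<in> sets M"
proof -
  let ?P = "PiM I (\<lambda>_. count_space (UNIV::nat set))"
  have "{\<omega>\<in>space M. (\<lambda>i\<in>I. f i \<omega>) \<in> B} = (\<lambda>\<omega>. \<lambda>i\<in>I. f i \<omega>) -` (B \<inter> space ?P) \<inter> space M"
    by (auto simp: space_PiM)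
  also have "\<dots> \<in> sets M"
  proof (rule measurable_sets)
    show "(\<lambda>\<omega>. \<lambda>i\<in>I. f i \<omega>) \<in> measurable M ?P" by (rule measurable_restrict) (rule f)
    show "B \<inter> space ?P \<in> sets ?P" by (rule sets_PiM_nat_finite[OF I]) simp
  qed
  finally show ?thesis .
qed

text \<open>No measurability of f is needed: the integral is the supremum over simple functions below f.\<close>

lemma emeasure_le_nn_integral_Markov:
  fixes f :: "'a \<Rightarrow> ennreal"
  assumes S: "S \<in> sets M" and t: "0 < t" and AE: "AE x in M. x \<in> S \<longrightarrow> ennreal t \<le> f x"
  shows "emeasure M S \<le> ennreal (1 / t) * (\<integral>\<^sup>+x. f x \<partial>M)"
proof -
  have "ennreal t * emeasure M S = (\<integral>\<^sup>+x. ennreal t * indicator S x \<partial>M)"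
    by (rule nn_integral_cmult_indicator[symmetric, OF S])
  also have "\<dots> \<le> (\<integral>\<^sup>+x. f x \<partial>M)"
    by (rule nn_integral_mono_AE) (use AE in \<open>auto simp: indicator_def\<close>)
  finally have "ennreal (1 / t) * (ennreal t * emeasure M S) \<le> ennreal (1 / t) * (\<integral>\<^sup>+x. f x \<partial>M)"
    by (rule mult_left_mono) simp
  moreover have "ennreal (1 / t) * ennreal t = 1" using t by (simp add: ennreal_mult[symmetric])
  ultimately show ?thesis by (simp add: mult.assoc[symmetric])
qed

section \<open>Windows with many ancestors\<close>

locale lookdown_ppp =
  fixes M :: "'w measure" and Xi :: "'w \<Rightarrow> event set" and \<Lambda> :: "real measure"
  assumes finite_Lambda: "finite_measure \<Lambda>"
    and PPP: "poisson_point_process M Xi (event_intensity \<Lambda>)"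
begin

sublocale prob_space M
  using PPP by (simp add: poisson_point_process_def)

lemma cell_event_intensity:
  assumes "0 \<le> a" "0 < h" "B \<in> sets mark_space" "B \<subseteq> relevant_marks J"
  shows "cell a h i \<times> B \<in> sets (event_intensity \<Lambda>)"
    and "emeasure (event_intensity \<Lambda>) (cell a h i \<times> B) < \<infinity>"
    and "emeasure (event_intensity \<Lambda>) (cell a h i \<times> B) = intensity_scale \<Lambda> * (ennreal h * emeasure (mark_intensity \<Lambda>) B)"
proof -
  have c: "cell a h i \<in> sets borel" "cell a h i \<subseteq> {0..}" using cell_borel cell_nonneg assms(1,2) by auto
  show "cell a h i \<times> B \<in> sets (event_intensity \<Lambda>)" by (rule event_intensity_Times(1)[OF c assms(3)])
  show "emeasure (event_intensity \<Lambda>) (cell a h i \<times> B) < \<infinity>"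
    by (rule emeasure_event_intensity_finite[OF finite_Lambda c]) (use emeasure_cell[of h a i] assms in auto)
  show "emeasure (event_intensity \<Lambda>) (cell a h i \<times> B) = intensity_scale \<Lambda> * (ennreal h * emeasure (mark_intensity \<Lambda>) B)"
    using event_intensity_Times(2)[OF c assms(3)] emeasure_cell[of h a i] assms(2) by simp
qed

lemma measurable_cell_count:
  assumes "0 \<le> a" "0 < h" "B \<in> sets mark_space" "B \<subseteq> relevant_marks J"
  shows "(\<lambda>\<omega>. card (Xi \<omega> \<inter> (cell a h i \<times> B))) \<in> measurable M (count_space UNIV)"
  using poisson_point_processD(3)[OF PPP cell_event_intensity(1,2)[OF assms]] .

text \<open>A consequence of the stationarity in time of the intensity and of independence over
disjoint sets.\<close>

lemma law_lookdown_coalescent_cells: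
  assumes r: "0 \<le> r" and h: "0 < h"
  shows "prob {\<omega>\<in>space M. cell_counts (Xi \<omega>) (\<lambda>(i,S). cell r h i \<times> pattern_marks J S) ({..<K} \<times> patterns J) \<in> B} =
         prob {\<omega>\<in>space M. cell_counts (Xi \<omega>) (\<lambda>(i,S). cell 0 h (K - 1 - i) \<times> pattern_marks J S) ({..<K} \<times> patterns J) \<in> B}"
  unfolding cell_counts_def
proof (rule poisson_counts_law_eq[OF PPP])
  show "finite ({..<K} \<times> patterns J)" using finite_patterns by simp
  show "disjoint_family_on (\<lambda>(i,S). cell r h i \<times> pattern_marks J S) ({..<K} \<times> patterns J)"
    using disjoint_family_on_cells[OF h, of id K r J] by simp
  show "disjoint_family_on (\<lambda>(i,S). cell 0 h (K - 1 - i) \<times> pattern_marks J S) ({..<K} \<times> patterns J)"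
    by (rule disjoint_family_on_cells[OF h]) (auto simp: inj_on_def)
qed (use cell_event_intensity[OF r h pattern_marks_sets pattern_marks_subset]
       cell_event_intensity[OF order_refl h pattern_marks_sets pattern_marks_subset] in auto)

lemma prob_crowded_cells:
  assumes a: "0 \<le> a" and h: "0 < h"
  shows "prob {\<omega>\<in>space M. \<exists>i<K. 2 \<le> card (Xi \<omega> \<inter> (cell a h i \<times> relevant_marks J))}
      \<le> real K * (h * enn2real (emeasure (mark_intensity \<Lambda>) (relevant_marks J)))\<^sup>2"
proof -
  define \<rho> where "\<rho> = enn2real (emeasure (mark_intensity \<Lambda>) (relevant_marks J))"
  have "emeasure (mark_intensity \<Lambda>) (relevant_marks J) < \<infinity>"
    using emeasure_mark_intensity_le[of \<Lambda> "relevant_marks J"] mark_premeasure_relevant_marks_finite[OF finite_Lambda, of J]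
    by (simp add: le_less_trans)
  then have \<rho>: "emeasure (mark_intensity \<Lambda>) (relevant_marks J) = ennreal \<rho>" "0 \<le> \<rho>" by (simp_all add: \<rho>_def)
  let ?B = "\<lambda>i. {\<omega>\<in>space M. 2 \<le> card (Xi \<omega> \<inter> (cell a h i \<times> relevant_marks J))}"
  have Bs: "?B i \<in> events" for i
    using measurable_sets_Collect[OF measurable_cell_count[OF a h relevant_marks_sets order_refl], of "\<lambda>n. 2 \<le> n"]
    by simp
  have B_le: "prob (?B i) \<le> (h * \<rho>)\<^sup>2" for i
  proof -
    note cs = cell_event_intensity[of a h "relevant_marks J" J i, OF a h relevant_marks_sets order_refl]
    have "emeasure (event_intensity \<Lambda>) (cell a h i \<times> relevant_marks J) = intensity_scale \<Lambda> * ennreal (h * \<rho>)"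
      using cs(3) \<rho> h by (simp add: ennreal_mult)
    then have "enn2real (emeasure (event_intensity \<Lambda>) (cell a h i \<times> relevant_marks J)) \<le> h * \<rho>"
      using intensity_scale_0_or_1[of \<Lambda>] h \<rho> by auto
    then have "(enn2real (emeasure (event_intensity \<Lambda>) (cell a h i \<times> relevant_marks J)))\<^sup>2 \<le> (h * \<rho>)\<^sup>2"
      by (rule power_mono) simp
    with poisson_point_process_prob_ge2[OF PPP cs(1,2)] show ?thesis by (rule order_trans)
  qed
  have "{\<omega>\<in>space M. \<exists>i<K. 2 \<le> card (Xi \<omega> \<inter> (cell a h i \<times> relevant_marks J))} = (\<Union>i\<in>{..<K}. ?B i)" by auto
  then have "prob {\<omega>\<in>space M. \<exists>i<K. 2 \<le> card (Xi \<omega> \<inter> (cell a h i \<times> relevant_marks J))} \<le> (\<Sum>i\<in>{..<K}. prob (?B i))"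
    using finite_measure_subadditive_finite[of "{..<K}" ?B] Bs by auto
  also have "\<dots> \<le> real K * (h * \<rho>)\<^sup>2" using sum_mono[of "{..<K}", OF B_le] by simp
  finally show ?thesis by (simp add: \<rho>_def)
qed

lemma AE_regular_events: "AE \<omega> in M. regular_events (Xi \<omega>)"
proof -
  have "AE \<omega> in M. finite (Xi \<omega> \<inter> ({0..real N} \<times> relevant_marks J))" for J N
  proof -
    have I: "{0..real N} \<in> sets borel" "{0..real N} \<subseteq> {0..}" "emeasure lborel {0..real N} < \<infinity>"
      by auto
    show ?thesis
      by (rule poisson_point_processD(2)[OF PPP event_intensity_Times(1)[OF I(1,2) relevant_marks_sets]
          emeasure_event_intensity_finite[OF finite_Lambda I relevant_marks_sets order_refl]])
  qed
  then have fin: "AE \<omega> in M. \<forall>J N. finite (Xi \<omega> \<inter> ({0..real N} \<times> relevant_marks J))"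
    by (simp add: AE_all_countable)
  have "AE \<omega> in M. Xi \<omega> \<inter> ({0} \<times> relevant_marks J) = {}" for J
  proof -
    have I: "{0::real} \<in> sets borel" "{0::real} \<subseteq> {0..}" by auto
    have Zs: "{0} \<times> relevant_marks J \<in> sets (event_intensity \<Lambda>)"
      by (rule event_intensity_Times(1)[OF I relevant_marks_sets])
    have Z0: "emeasure (event_intensity \<Lambda>) ({0} \<times> relevant_marks J) = 0"
      using event_intensity_Times(2)[OF I relevant_marks_sets] by simp
    then have Zf: "emeasure (event_intensity \<Lambda>) ({0} \<times> relevant_marks J) < \<infinity>" by simp
    have "prob {\<omega>\<in>space M. card (Xi \<omega> \<inter> ({0} \<times> relevant_marks J)) = 0} = 1"
      using poisson_point_processD(4)[OF PPP Zs Zf, of 0] Z0 by simp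
    then have "AE \<omega> in M. \<omega> \<in> {\<omega>\<in>space M. card (Xi \<omega> \<inter> ({0} \<times> relevant_marks J)) = 0}"
      by (rule AE_prob_1)
    moreover have "AE \<omega> in M. finite (Xi \<omega> \<inter> ({0} \<times> relevant_marks J))"
      by (rule poisson_point_processD(2)[OF PPP Zs Zf])
    ultimately show ?thesis by eventually_elim auto
  qed
  then have "AE \<omega> in M. \<forall>J. Xi \<omega> \<inter> ({0} \<times> relevant_marks J) = {}" by (simp add: AE_all_countable)
  with fin show ?thesis by eventually_elim (simp add: regular_events_def)
qed

definition counts_event :: "('i \<Rightarrow> event set) \<Rightarrow> 'i set \<Rightarrow> ('i \<Rightarrow> nat) set \<Rightarrow> 'w set" where
  "counts_event A I B = {\<omega>\<in>space M. cell_counts (Xi \<omega>) A I \<in> B}"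

definition crowded_cells_event :: "nat \<Rightarrow> nat \<Rightarrow> nat \<Rightarrow> nat \<Rightarrow> 'w set" where
  "crowded_cells_event n k J m =
     {\<omega>\<in>space M. \<exists>i<2^m. 2 \<le> card (Xi \<omega> \<inter> (cell (window_start n k) (cell_width n m) i \<times> relevant_marks J))}"

definition many_ancestors_upto_event :: "nat \<Rightarrow> nat \<Rightarrow> nat \<Rightarrow> real \<Rightarrow> 'w set" where
  "many_ancestors_upto_event n k J c =
     (\<Inter>m. counts_event (lookdown_cells n k J m) (cell_indices J m) (many_ancestors_counts J (2^m) c)
          \<union> crowded_cells_event n k J m)"

definition many_ancestors_event :: "nat \<Rightarrow> nat \<Rightarrow> real \<Rightarrow> 'w set" where
  "many_ancestors_event n k c = (\<Union>J. \<Inter>J'\<in>{J..}. many_ancestors_upto_event n k J' c)"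

lemma counts_event_sets:
  assumes "0 \<le> a"
  shows "counts_event (\<lambda>(i,S). cell a (cell_width n m) (\<sigma> i) \<times> pattern_marks J S) (cell_indices J m) B \<in> events"
  unfolding counts_event_def cell_counts_def
proof (rule sets_Collect_restrict_nat_vector)
  show "finite (cell_indices J m)" by (simp add: cell_indices_def finite_patterns)
qed (use assms in \<open>auto simp: cell_indices_def
      intro!: measurable_cell_count[OF _ cell_width_pos pattern_marks_sets pattern_marks_subset]\<close>)

lemma lookdown_counts_event_sets:
  "1 \<le> k \<Longrightarrow> counts_event (lookdown_cells n k J m) (cell_indices J m) B \<in> events"
  using counts_event_sets[of "window_start n k" n m id] by (simp add: lookdown_cells_def window_start_nonneg)

lemma coalescent_counts_event_sets:
  "counts_event (coalescent_cells n J m) (cell_indices J m) B \<in> events"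
  using counts_event_sets[of 0 n m "\<lambda>i. 2^m - 1 - i"] by (simp add: coalescent_cells_def)

lemma crowded_cells_event_sets: "1 \<le> k \<Longrightarrow> crowded_cells_event n k J m \<in> events"
proof -
  assume k: "1 \<le> k"
  have "crowded_cells_event n k J m = (\<Union>i\<in>{..<2^m}.
      {\<omega>\<in>space M. card (Xi \<omega> \<inter> (cell (window_start n k) (cell_width n m) i \<times> relevant_marks J)) \<in> {2..}})"
    by (auto simp: crowded_cells_event_def)
  also have "\<dots> \<in> events"
    using measurable_sets_Collect[OF measurable_cell_count[OF window_start_nonneg[OF k] cell_width_pos
          relevant_marks_sets order_refl], of "\<lambda>n. n \<in> {2..}"]
    by (intro sets.finite_UN finite_lessThan ballI) simp
  finally show ?thesis .
qed

lemma many_ancestors_upto_event_sets: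
  assumes "1 \<le> k" shows "many_ancestors_upto_event n k J c \<in> events"
  unfolding many_ancestors_upto_event_def
  by (rule sets.countable_INT) (auto intro!: sets.Un lookdown_counts_event_sets crowded_cells_event_sets assms)

lemma many_ancestors_event_sets:
  assumes "1 \<le> k" shows "many_ancestors_event n k c \<in> events"
  unfolding many_ancestors_event_def
  by (intro sets.countable_UN[of _ UNIV, simplified] image_subsetI sets.countable_INT)
    (auto intro!: many_ancestors_upto_event_sets assms)

lemma emeasure_coalescent_counts_event:
  assumes mc: "real mm < c"
  shows "emeasure M (counts_event (coalescent_cells n J m) (cell_indices J m) (many_ancestors_counts J (2^m) c))
    \<le> ennreal (2^n) * (\<integral>\<^sup>+\<omega>. T_hit (Xi \<omega>) mm \<partial>M)"
proof -
  have "emeasure M (counts_event (coalescent_cells n J m) (cell_indices J m) (many_ancestors_counts J (2^m) c))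
      \<le> ennreal (1 / (1 / 2 ^ n)) * (\<integral>\<^sup>+\<omega>. T_hit (Xi \<omega>) mm \<partial>M)"
  proof (rule emeasure_le_nn_integral_Markov[OF coalescent_counts_event_sets])
    show "AE \<omega> in M. \<omega> \<in> counts_event (coalescent_cells n J m) (cell_indices J m) (many_ancestors_counts J (2^m) c)
        \<longrightarrow> ennreal (1 / 2 ^ n) \<le> T_hit (Xi \<omega>) mm"
      using AE_regular_events
    proof eventually_elim
      case (elim \<omega>)
      show ?case
        by (auto simp: counts_event_def coalescent_cells_def cell_indices_def divide_le_eq
            intro!: T_hit_ge_of_reversed_counts[where N=1, OF elim cell_width_pos _ _ _ mc])
          (use two_power_mult_cell_width in auto)
    qed
  qed simp
  then show ?thesis by simp
qed

lemma emeasure_lookdown_counts_event: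
  assumes k: "1 \<le> k" and mc: "real mm < c"
  shows "emeasure M (counts_event (lookdown_cells n k J m) (cell_indices J m) (many_ancestors_counts J (2^m) c))
    \<le> ennreal (2^n) * (\<integral>\<^sup>+\<omega>. T_hit (Xi \<omega>) mm \<partial>M)"
proof -
  have "prob (counts_event (lookdown_cells n k J m) (cell_indices J m) (many_ancestors_counts J (2^m) c)) =
      prob (counts_event (coalescent_cells n J m) (cell_indices J m) (many_ancestors_counts J (2^m) c))"
    unfolding counts_event_def lookdown_cells_def coalescent_cells_def cell_indices_def
    by (rule law_lookdown_coalescent_cells[OF window_start_nonneg[OF k] cell_width_pos])
  then show ?thesis
    using emeasure_coalescent_counts_event[OF mc] lookdown_counts_event_sets[OF k] coalescent_counts_event_sets
    by (simp add: emeasure_eq_measure)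
qed

lemma prob_crowded_cells_event:
  assumes k: "1 \<le> k"
  shows "prob (crowded_cells_event n k J m) \<le> (enn2real (emeasure (mark_intensity \<Lambda>) (relevant_marks J)))\<^sup>2 / 2 ^ m"
proof -
  define \<rho> where "\<rho> = enn2real (emeasure (mark_intensity \<Lambda>) (relevant_marks J))"
  have "prob (crowded_cells_event n k J m) \<le> real (2^m) * (cell_width n m * \<rho>)\<^sup>2"
    unfolding crowded_cells_event_def \<rho>_def by (rule prob_crowded_cells[OF window_start_nonneg[OF k] cell_width_pos])
  also have "\<dots> = \<rho>\<^sup>2 / (2^n)\<^sup>2 / 2 ^ m" by (simp add: cell_width_def power2_eq_square field_simps)
  also have "\<dots> \<le> \<rho>\<^sup>2 / 2 ^ m"
  proof -
    have "\<rho>\<^sup>2 / (2^n)\<^sup>2 \<le> \<rho>\<^sup>2 / 1" by (rule divide_left_mono) simp_all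
    then show ?thesis by (intro divide_right_mono) simp_all
  qed
  finally show ?thesis by (simp add: \<rho>_def)
qed

lemma emeasure_many_ancestors_upto_event:
  assumes k: "1 \<le> k" and mc: "real mm < c"
  shows "emeasure M (many_ancestors_upto_event n k J c) \<le> ennreal (2^n) * (\<integral>\<^sup>+\<omega>. T_hit (Xi \<omega>) mm \<partial>M)"
proof (rule ennreal_le_epsilon)
  fix e :: real assume e: "0 < e"
  define \<rho> where "\<rho> = enn2real (emeasure (mark_intensity \<Lambda>) (relevant_marks J))"
  obtain m :: nat where m: "\<rho>\<^sup>2 / e < 2 ^ m" using real_arch_pow[of 2 "\<rho>\<^sup>2 / e"] by auto
  let ?V = "counts_event (lookdown_cells n k J m) (cell_indices J m) (many_ancestors_counts J (2^m) c)"
  have "\<rho>\<^sup>2 < 2 ^ m * e" using m e by (simp add: pos_divide_less_eq)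
  then have "\<rho>\<^sup>2 / 2 ^ m < e" by (simp add: pos_divide_less_eq mult.commute)
  then have "prob (crowded_cells_event n k J m) \<le> e"
    using prob_crowded_cells_event[OF k, of n J m] by (simp add: \<rho>_def)
  then have crowded: "emeasure M (crowded_cells_event n k J m) \<le> ennreal e"
    by (simp add: emeasure_eq_measure ennreal_leI)
  have "emeasure M (many_ancestors_upto_event n k J c) \<le> emeasure M (?V \<union> crowded_cells_event n k J m)"
    by (rule emeasure_mono)
      (auto simp: many_ancestors_upto_event_def intro!: sets.Un lookdown_counts_event_sets crowded_cells_event_sets k)
  also have "\<dots> \<le> emeasure M ?V + emeasure M (crowded_cells_event n k J m)"
    by (rule emeasure_subadditive) (auto intro!: sets.Un lookdown_counts_event_sets crowded_cells_event_sets k)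
  also have "\<dots> \<le> ennreal (2^n) * (\<integral>\<^sup>+\<omega>. T_hit (Xi \<omega>) mm \<partial>M) + ennreal e"
    by (rule add_mono[OF emeasure_lookdown_counts_event[OF k mc] crowded])
  finally show "emeasure M (many_ancestors_upto_event n k J c) \<le> ennreal (2^n) * (\<integral>\<^sup>+\<omega>. T_hit (Xi \<omega>) mm \<partial>M) + ennreal e" .
qed

lemma emeasure_many_ancestors_event:
  assumes k: "1 \<le> k" and mc: "real mm < c"
  shows "emeasure M (many_ancestors_event n k c) \<le> ennreal (2^n) * (\<integral>\<^sup>+\<omega>. T_hit (Xi \<omega>) mm \<partial>M)"
proof -
  define G where "G = (\<lambda>J. \<Inter>J'\<in>{J..}. many_ancestors_upto_event n k J' c)"
  have G: "G J \<in> events" for J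
    unfolding G_def by (rule sets.countable_INT) (auto intro!: many_ancestors_upto_event_sets[OF k])
  have "emeasure M (many_ancestors_event n k c) = (SUP J. emeasure M (G J))"
    unfolding many_ancestors_event_def G_def[symmetric]
    by (rule SUP_emeasure_incseq[symmetric]) (use G in \<open>auto simp: G_def incseq_def\<close>)
  also have "\<dots> \<le> ennreal (2^n) * (\<integral>\<^sup>+\<omega>. T_hit (Xi \<omega>) mm \<partial>M)"
  proof (rule SUP_least)
    fix J
    have "emeasure M (G J) \<le> emeasure M (many_ancestors_upto_event n k J c)"
      by (rule emeasure_mono) (auto simp: G_def intro!: many_ancestors_upto_event_sets k)
    then show "emeasure M (G J) \<le> ennreal (2^n) * (\<integral>\<^sup>+\<omega>. T_hit (Xi \<omega>) mm \<partial>M)"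
      using emeasure_many_ancestors_upto_event[OF k mc] by (rule order_trans)
  qed
  finally show ?thesis .
qed

lemma many_ancestors_event_if_not_N_nk_less:
  assumes \<omega>: "\<omega> \<in> space M" and g: "regular_events (Xi \<omega>)" and k: "1 \<le> k"
    and N: "\<not> N_nk_less (Xi \<omega>) n k c"
  shows "\<omega> \<in> many_ancestors_event n k c"
proof -
  obtain J where J: "\<And>J'. J \<le> J' \<Longrightarrow> c \<le> real (card (ancestors_upto (Xi \<omega>) (window_start n k) (real k / 2 ^ n) J'))"
    using ancestors_upto_large[OF N] unfolding window_start_def by blast
  have "\<omega> \<in> counts_event (lookdown_cells n k J' m) (cell_indices J' m) (many_ancestors_counts J' (2^m) c)"
    if "J \<le> J'" "\<omega> \<notin> crowded_cells_event n k J' m" for J' m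
  proof -
    have crowd: "\<forall>i<2^m. card (Xi \<omega> \<inter> (cell (window_start n k) (cell_width n m) i \<times> relevant_marks J')) \<le> 1"
      using that(2) \<omega> by (auto simp: crowded_cells_event_def not_le)
    have "real k / 2 ^ n \<le> real k / 1" by (rule divide_left_mono) simp_all
    then have end_le: "real k / 2 ^ n \<le> real k" by simp
    have end_eq: "real k / 2 ^ n = window_start n k + real (2^m) * cell_width n m"
      using window_end by simp
    have "cell_counts (Xi \<omega>) (\<lambda>(i,S). cell (window_start n k) (cell_width n m) i \<times> pattern_marks J' S)
        ({..<2^m} \<times> patterns J') \<in> many_ancestors_counts J' (2^m) c"
      by (rule lookdown_counts_in_many_ancestors[OF g cell_width_pos window_start_nonneg[OF k]
            end_eq end_le crowd J[OF that(1)]])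
    then show ?thesis using \<omega> by (simp add: counts_event_def lookdown_cells_def cell_indices_def)
  qed
  then show ?thesis unfolding many_ancestors_event_def many_ancestors_upto_event_def by blast
qed

definition many_ancestors_windows :: "nat \<Rightarrow> real \<Rightarrow> real \<Rightarrow> 'w set" where
  "many_ancestors_windows n T c = (\<Union>k\<in>{1..nat \<lfloor>2 ^ n * T\<rfloor>}. many_ancestors_event n k c)"

lemma many_ancestors_windows_sets: "many_ancestors_windows n T c \<in> events"
  unfolding many_ancestors_windows_def by (auto intro!: sets.finite_UN many_ancestors_event_sets)

lemma prob_many_ancestors_windows:
  assumes T: "0 < T" and mc: "real mm < c" and e: "0 \<le> e"
    and E: "(\<integral>\<^sup>+\<omega>. T_hit (Xi \<omega>) mm \<partial>M) \<le> ennreal e"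
  shows "prob (many_ancestors_windows n T c) \<le> T * (4 ^ n * e)"
proof -
  let ?W = "{1..nat \<lfloor>2 ^ n * T\<rfloor>}"
  have "emeasure M (many_ancestors_windows n T c) \<le> (\<Sum>k\<in>?W. emeasure M (many_ancestors_event n k c))"
    unfolding many_ancestors_windows_def
    by (rule emeasure_subadditive_finite) (auto intro!: many_ancestors_event_sets)
  also have "\<dots> \<le> (\<Sum>k\<in>?W. ennreal (2^n * e))"
  proof (rule sum_mono)
    fix k assume "k \<in> ?W"
    then have "emeasure M (many_ancestors_event n k c) \<le> ennreal (2^n) * (\<integral>\<^sup>+\<omega>. T_hit (Xi \<omega>) mm \<partial>M)"
      by (intro emeasure_many_ancestors_event mc) simp
    also have "\<dots> \<le> ennreal (2^n) * ennreal e" by (rule mult_left_mono[OF E]) simp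
    finally show "emeasure M (many_ancestors_event n k c) \<le> ennreal (2^n * e)"
      by (simp add: ennreal_mult e)
  qed
  also have "\<dots> = ennreal (real (card ?W) * (2^n * e))"
    using e by (simp add: ennreal_mult ennreal_of_nat_eq_real_of_nat)
  finally have "prob (many_ancestors_windows n T c) \<le> real (card ?W) * (2^n * e)"
    using many_ancestors_windows_sets e by (simp add: emeasure_eq_measure)
  also have "\<dots> \<le> 2 ^ n * T * (2^n * e)"
    using T e by (intro mult_right_mono) simp_all
  also have "\<dots> = T * (4 ^ n * e)" by (simp add: power_mult_distrib[symmetric])
  finally show ?thesis .
qed

lemma N_nk_less_if_not_many_ancestors_windows:
  assumes "\<omega> \<in> space M" "regular_events (Xi \<omega>)" "\<omega> \<notin> many_ancestors_windows n T c"
    and "1 \<le> k" "real k \<le> 2 ^ n * T"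
  shows "N_nk_less (Xi \<omega>) n k c"
proof -
  have "k \<in> {1..nat \<lfloor>2 ^ n * T\<rfloor>}" using assms(4,5) by (simp add: le_nat_iff le_floor_iff)
  then show ?thesis
    using assms(3) many_ancestors_event_if_not_N_nk_less[OF assms(1,2,4)]
    unfolding many_ancestors_windows_def by blast
qed

lemma AE_eventually_N_nk_less:
  assumes T: "0 < T"
    and mc: "\<forall>\<^sub>F n in sequentially. real (m n) < c n"
    and E: "\<forall>\<^sub>F n in sequentially. (\<integral>\<^sup>+\<omega>. T_hit (Xi \<omega>) (m n) \<partial>M) \<le> ennreal (e n)"
    and e_nonneg: "\<And>n. 0 \<le> e n" and summable: "summable (\<lambda>n. 4 ^ n * e n)"
  shows "AE \<omega> in M. \<forall>\<^sub>F n in sequentially. \<forall>k::nat. 1 \<le> k \<and> real k \<le> 2 ^ n * T \<longrightarrow> N_nk_less (Xi \<omega>) n k (c n)"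
proof -
  let ?B = "\<lambda>n. many_ancestors_windows n T (c n)"
  from mc E have "\<forall>\<^sub>F n in sequentially. norm (prob (?B n)) \<le> T * (4 ^ n * e n)"
    by eventually_elim (simp add: prob_many_ancestors_windows[OF T _ e_nonneg])
  then have "summable (\<lambda>n. prob (?B n))"
    using summable_mult[OF summable, of T] by (rule summable_comparison_test_ev)
  then have "AE \<omega> in M. \<forall>\<^sub>F n in sequentially. \<omega> \<in> space M - ?B n"
    using many_ancestors_windows_sets by (intro borel_cantelli_AE1) (auto simp: emeasure_eq_measure)
  with AE_regular_events AE_space show ?thesis
  proof eventually_elim
    case (elim \<omega>)
    from elim(3) show ?case
      by eventually_elim (use elim(1,2) N_nk_less_if_not_many_ancestors_windows in blast)
  qed
qed

end

section \<open>The threshold and the main theorem\<close>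

lemma limsup_mult_powr_bounded:
  fixes f :: "nat \<Rightarrow> ennreal"
  assumes "limsup (\<lambda>m. ennreal (real m powr \<alpha>) * f m) < \<infinity>"
  obtains K where "0 < K" "\<forall>\<^sub>F m in sequentially. f m \<le> ennreal (K / real m powr \<alpha>)"
proof
  define K where "K = enn2real (limsup (\<lambda>m. ennreal (real m powr \<alpha>) * f m)) + 1"
  show K: "0 < K" unfolding K_def by (simp add: add_nonneg_pos)
  have "limsup (\<lambda>m. ennreal (real m powr \<alpha>) * f m) < ennreal K"
    using assms by (cases "limsup (\<lambda>m. ennreal (real m powr \<alpha>) * f m)") (auto simp: K_def)
  then have "\<forall>\<^sub>F m in sequentially. ennreal (real m powr \<alpha>) * f m < ennreal K"
    by (rule Limsup_lessD)
  then show "\<forall>\<^sub>F m in sequentially. f m \<le> ennreal (K / real m powr \<alpha>)"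
    using eventually_gt_at_top[of 0]
  proof eventually_elim
    case (elim m)
    define p where "p = real m powr \<alpha>"
    have p: "0 < p" using elim(2) by (simp add: p_def)
    have "f m = ennreal (1 / p) * (ennreal p * f m)"
      using p by (simp add: mult.assoc[symmetric] ennreal_mult[symmetric])
    also have "\<dots> \<le> ennreal (1 / p) * ennreal K"
      using elim(1) by (intro mult_left_mono) (simp_all add: p_def)
    also have "\<dots> = ennreal (K / p)" using p K by (simp add: ennreal_mult[symmetric])
    finally show ?case by (simp add: p_def)
  qed
qed

lemma one_plus_le_four_powr: "0 \<le> x \<Longrightarrow> 1 + x \<le> 4 powr (x::real)"
proof -
  assume x: "0 \<le> x"
  have "exp 1 \<le> (4::real)" using exp_le by simp
  then have "1 \<le> ln (4::real)" by (subst ln_ge_iff) simp_all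
  then have "x \<le> x * ln 4" using x by (simp add: mult_le_cancel_left1)
  then have "exp x \<le> 4 powr x" by (simp add: powr_def)
  then show ?thesis using exp_ge_add_one_self[of x] by linarith
qed

lemma nat_ceiling_minus_one:
  fixes x :: real
  assumes "1 \<le> x"
  shows "real (nat \<lceil>x\<rceil> - 1) < x" and "x - 1 \<le> real (nat \<lceil>x\<rceil> - 1)"
proof -
  have "1 \<le> \<lceil>x\<rceil>" using assms by (simp add: le_ceiling_iff)
  moreover from this have "1 \<le> nat \<lceil>x\<rceil>" by linarith
  ultimately have "real (nat \<lceil>x\<rceil> - 1) = real_of_int \<lceil>x\<rceil> - 1" by (simp add: of_nat_diff)
  then show "real (nat \<lceil>x\<rceil> - 1) < x" "x - 1 \<le> real (nat \<lceil>x\<rceil> - 1)"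
    using ceiling_correct[of x] by linarith+
qed

text \<open>The threshold is chosen so that 4^n / (4^(n/\<alpha>) n^(2/\<alpha>))^\<alpha> = 1 / n^2 is summable.\<close>

lemma dyadic_threshold_asymptotics:
  fixes \<alpha> :: real
  assumes \<alpha>: "0 < \<alpha>" and c: "c = (\<lambda>n::nat. 4 powr (real n / \<alpha>) * real n powr (2 / \<alpha>))"
    and m: "m = (\<lambda>n. nat \<lceil>c n\<rceil> - 1)"
  shows "\<forall>\<^sub>F n in sequentially. real (m n) < c n"
    and "filterlim m at_top sequentially"
    and "summable (\<lambda>n. 4 ^ n / real (m n) powr \<alpha>)"
proof -
  have c_ge: "1 + real n / \<alpha> \<le> c n" if "1 \<le> n" for n
  proof -
    have "(1 + real n / \<alpha>) * 1 \<le> 4 powr (real n / \<alpha>) * real n powr (2 / \<alpha>)"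
      using one_plus_le_four_powr[of "real n / \<alpha>"] \<alpha> that
      by (intro mult_mono ge_one_powr_ge_zero) simp_all
    then show ?thesis by (simp add: c)
  qed
  have c1: "1 \<le> c n" if "1 \<le> n" for n
    using c_ge[OF that] \<alpha> by (smt (verit) divide_nonneg_pos of_nat_0_le_iff)
  have m_bounds: "real (m n) < c n" "c n - 1 \<le> real (m n)" if "1 \<le> n" for n
    using nat_ceiling_minus_one[OF c1[OF that]] by (simp_all add: m)
  show "\<forall>\<^sub>F n in sequentially. real (m n) < c n"
    using eventually_ge_at_top[of 1] by eventually_elim (rule m_bounds(1))
  show "filterlim m at_top sequentially"
    unfolding filterlim_at_top
  proof
    fix Z :: nat
    show "\<forall>\<^sub>F n in sequentially. Z \<le> m n"
      using eventually_ge_at_top[of "max 1 (nat \<lceil>\<alpha> * real Z\<rceil>)"]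
    proof eventually_elim
      case (elim n)
      then have "\<alpha> * real Z \<le> real n" by linarith
      then have "real Z \<le> real n / \<alpha>" using \<alpha> by (simp add: field_simps)
      then show ?case using c_ge[of n] m_bounds(2)[of n] elim by simp
    qed
  qed
  have "\<forall>\<^sub>F n in sequentially. norm (4 ^ n / real (m n) powr \<alpha>) \<le> 2 powr \<alpha> * inverse ((real n)\<^sup>2)"
    using eventually_ge_at_top[of "max 1 (nat \<lceil>\<alpha>\<rceil>)"]
  proof eventually_elim
    case (elim n)
    then have n: "1 \<le> n" "\<alpha> \<le> real n" by linarith+
    have "1 \<le> real n / \<alpha>" using n \<alpha> by (simp add: field_simps)
    then have "2 \<le> c n" using c_ge[OF n(1)] by linarith
    then have half: "c n / 2 \<le> real (m n)" using m_bounds(2)[OF n(1)] by simp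
    have "c n powr \<alpha> = 4 ^ n * (real n)\<^sup>2"
      using \<alpha> n by (simp add: c powr_mult powr_powr powr_realpow)
    then have low: "4 ^ n * (real n)\<^sup>2 / 2 powr \<alpha> \<le> real (m n) powr \<alpha>"
      using powr_mono2[OF less_imp_le[OF \<alpha>] _ half] \<open>2 \<le> c n\<close> by (simp add: powr_divide)
    moreover have pos: "0 < 4 ^ n * (real n)\<^sup>2 / 2 powr \<alpha>" using n by simp
    ultimately have rm: "0 < real (m n) powr \<alpha>" by linarith
    have "4 ^ n / real (m n) powr \<alpha> \<le> 4 ^ n / (4 ^ n * (real n)\<^sup>2 / 2 powr \<alpha>)"
      by (rule divide_left_mono[OF low _ mult_pos_pos[OF rm pos]]) simp
    then show ?case using n by (simp add: field_simps)
  qed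
  then show "summable (\<lambda>n. 4 ^ n / real (m n) powr \<alpha>)"
    using summable_mult[OF inverse_power_summable[of 2], of "2 powr \<alpha>"]
    by (rule summable_comparison_test_ev) simp
qed

theorem lemma5p7:
  fixes M :: "'w measure" and Xi :: "'w \<Rightarrow> event set" and \<Lambda> :: "real measure"
    and \<alpha> :: real and T :: real
  assumes Lambda_finite: "finite_measure \<Lambda>"
    and Lambda_sets: "sets \<Lambda> = sets borel"
    and Lambda_support: "emeasure \<Lambda> (- {0..1}) = 0"
    and PPP: "poisson_point_process M Xi (event_intensity \<Lambda>)"
    and alpha_pos: "\<alpha> > 0"
    and assumption_I: "limsup (\<lambda>m::nat. ennreal (real m powr \<alpha>) * (\<integral>\<^sup>+\<omega>. T_hit (Xi \<omega>) m \<partial>M)) < \<infinity>"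
    and T_pos: "T > 0"
  shows "AE \<omega> in M. \<forall>\<^sub>F n in sequentially.
           \<forall>k::nat. 1 \<le> k \<and> real k \<le> 2 ^ n * T \<longrightarrow>
             N_nk_less (Xi \<omega>) n k (4 powr (real n / \<alpha>) * real n powr (2 / \<alpha>))"
proof -
  interpret lookdown_ppp M Xi \<Lambda> using Lambda_finite PPP by (rule lookdown_ppp.intro)
  obtain K where K: "0 < K"
    and E: "\<forall>\<^sub>F m in sequentially. (\<integral>\<^sup>+\<omega>. T_hit (Xi \<omega>) m \<partial>M) \<le> ennreal (K / real m powr \<alpha>)"
    using limsup_mult_powr_bounded[OF assumption_I] by blast
  define c where "c = (\<lambda>n::nat. 4 powr (real n / \<alpha>) * real n powr (2 / \<alpha>))"
  define m where "m = (\<lambda>n. nat \<lceil>c n\<rceil> - 1)"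
  note threshold = dyadic_threshold_asymptotics[OF alpha_pos c_def m_def]
  have "\<forall>\<^sub>F n in sequentially. (\<integral>\<^sup>+\<omega>. T_hit (Xi \<omega>) (m n) \<partial>M) \<le> ennreal (K / real (m n) powr \<alpha>)"
    using filterlim_iff[THEN iffD1, OF threshold(2)] E by blast
  moreover have "summable (\<lambda>n. 4 ^ n * (K / real (m n) powr \<alpha>))"
    using summable_mult[OF threshold(3), of K] by (simp add: mult.commute)
  ultimately have "AE \<omega> in M. \<forall>\<^sub>F n in sequentially. \<forall>k::nat. 1 \<le> k \<and> real k \<le> 2 ^ n * T \<longrightarrow> N_nk_less (Xi \<omega>) n k (c n)"
    using K by (intro AE_eventually_N_nk_less[OF T_pos threshold(1)]) auto
  then show ?thesis by (simp add: c_def)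
qed

end
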